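(* Let $\rho\in(\tfrac23,1]$ and $X\in C^\rho([0,1]^2,V)$ (i.e. $X$ continuous with $\sup\frac{\|X_{s_1,t_1}-X_{s_2,t_2}\|}{|(s_1,t_1)-(s_2,t_2)|^\rho}<\infty$). Define $\mathbb X=(\mathbf x^h,\mathbf x^v,\mathbf X)$ valued in $\mathbf G^{(\le2)}$ by $\mathbf x^{h,(1)}_{s_1,s_2;t}=X_{s_2,t}-X_{s_1,t}$, $\mathbf x^{h,(2)}_{s_1,s_2;t}=S^{(2)}(X|_{[s_1,s_2]\times\{t\}})$, $\mathbf x^{v,(1)}_{s;t_1,t_2}=X_{s,t_2}-X_{s,t_1}$, $\mathbf x^{v,(2)}_{s;t_1,t_2}=S^{(2)}(X|_{\{s\}\times[t_1,t_2]})$, and let $\mathbf X^{(2)}_{s_1,s_2;t_1,t_2}$ be the element of $T_1^{(2)}(V)=\Lambda^2V$ corresponding to $(\mathbf x^h_{s_1,s_2;t_1}\cdot\mathbf x^v_{s_2;t_1,t_2}\cdot(\mathbf x^h_{s_1,s_2;t_2})^{-1}\cdot(\mathbf x^v_{s_1;t_1,t_2})^{-1})^{(2)}$. Then (for a suitable choice of the constant $C_\omega$) $\mathbb X$ is a $\rho$-Hölder multiplicative double group functional valued in $\mathbf G^{(\le2)}$.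
   Context: $V$ is a finite-dimensional real Hilbert space with orthonormal basis $e_1,\dots,e_d$; $T_0^{(\le2)}=\mathbb R\oplus V\oplus V^{\otimes2}$ with product truncated at level 2 and words orthonormal. $S^{(2)}$ of a path is the level-2 component of its path signature, $\int_{a<u_1<u_2<b}dx_{u_1}\otimes dx_{u_2}$ (a Young integral for $\rho>1/2$). $G_0^{(\le2)}=\{\exp(x):x\in V\oplus[V,V]\}$ (truncated exponential). $T_1^{(2)}(V)=\Lambda^2V$ (orthonormal basis $e_i\wedge e_j$, $i<j$), $\delta(v\wedge w)=vw-wv$, and $G_1^{(\le2)}=\{1+E:E\in\Lambda^2V\}\subset\mathbb R\oplus\Lambda^2V$, with product $(1+E)(1+F)=1+E+F$; the level-2 part of the boundary product is antisymmetric and is identified with the element of $\Lambda^2V$ mapped to it by $\delta$. $g\in G_0^{(\le2)}$ acts by $g\triangleright(1+E)=1+g E g^{-1}$ truncated at level 2 (i.e. $1+E$). Rough-surface notions. $\sigma=\rho/2$; constant $C_\omega>0$, $\omega(a,b)=C_\omega|b-a|$, $(x)!=\Gamma(x+1)$; fixed $\beta>\max\{\frac2{\rho^2}(1+\sum_{r\ge3}(\frac2{r-2})^{\rho(\lfloor1/\rho\rfloor+1)}),\frac32\sum_{m\ge0}4^{m(1-(\lfloor2/\rho\rfloor+1)\rho)}\}$; $\Delta^2=\{0\le a\le b\le1\}$; $W^k_\sigma(s_1,s_2;t_1,t_2)=2^{2k\sigma}\sum_{q=1}^{2k-1}\frac{\omega^{q\sigma}(s_1,s_2)\omega^{(2k-q)\sigma}(t_1,t_2)}{(q\sigma)!((2k-q)\sigma)!}$.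 A double group functional valued in $\mathbf G^{(\le2)}$: $\mathbf x^h:\Delta^2\times[0,1]\to G_0^{(\le2)}$, $\mathbf x^v:[0,1]\times\Delta^2\to G_0^{(\le2)}$, $\mathbf X:\Delta^2\times\Delta^2\to G_1^{(\le2)}$ with $\mathbf x^h_{s_1,s_2;t}\mathbf x^h_{s_2,s_3;t}=\mathbf x^h_{s_1,s_3;t}$, $\mathbf x^v_{s;t_1,t_2}\mathbf x^v_{s;t_2,t_3}=\mathbf x^v_{s;t_1,t_3}$, and $\delta(\mathbf X_{s_1,s_2;t_1,t_2})=\mathbf x^h_{s_1,s_2;t_1}\mathbf x^v_{s_2;t_1,t_2}(\mathbf x^h_{s_1,s_2;t_2})^{-1}(\mathbf x^v_{s_1;t_1,t_2})^{-1}$. Multiplicative: $\mathbf X_{s_1,s_3;t_1,t_2}=(\mathbf x^h_{s_1,s_2;t_1}\triangleright\mathbf X_{s_2,s_3;t_1,t_2})*\mathbf X_{s_1,s_2;t_1,t_2}$ and $\mathbf X_{s_1,s_2;t_1,t_3}=\mathbf X_{s_1,s_2;t_1,t_2}*(\mathbf x^v_{s_1;t_1,t_2}\triangleright\mathbf X_{s_1,s_2;t_2,t_3})$. $\rho$-Hölder: for $k\in\{1,2\}$, $\|\mathbf x^{h,(k)}_{s_1,s_2;t}\|\le\frac{\omega^{k\rho}(s_1,s_2)}{\beta(k\rho)!}$, $\|\mathbf x^{v,(k)}_{s;t_1,t_2}\|\le\frac{\omega^{k\rho}(t_1,t_2)}{\beta(k\rho)!}$, $\|\mathbf x^{h,(k)}_{s_1,s_2;t_1}-\mathbf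 x^{h,(k)}_{s_1,s_2;t_2}\|\le\frac{\omega^{(2k-1)\sigma}(s_1,s_2)\omega^\sigma(t_1,t_2)}{\beta((2k-1)\sigma)!(\sigma)!}$, the symmetric condition for $\mathbf x^v$ with the roles of $s,t$ exchanged, and $\|\mathbf X^{(k)}_{s_1,s_2;t_1,t_2}\|\le W^k_\sigma/\beta$. *)

theory Defs
  imports "HOL-Analysis.Analysis"
begin

text \<open>An element of V (x) V is represented as a real bilinear form on V:
  the coefficient of the word e_i e_j is A e_i e_j.\<close>

type_synonym 'v tens2 = "'v \<Rightarrow> 'v \<Rightarrow> real"
type_synonym 'v talg = "real \<times> 'v \<times> 'v tens2"

definition tprod_vec :: "'v::real_inner \<Rightarrow> 'v \<Rightarrow> 'v tens2" where
  "tprod_vec a b = (\<lambda>u w. (a \<bullet> u) * (b \<bullet> w))"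

definition tone :: "'v::real_inner talg" where
  "tone = (1, 0, (\<lambda>u w. 0))"

definition tmul :: "'v::real_inner talg \<Rightarrow> 'v talg \<Rightarrow> 'v talg" where
  "tmul a b = (case a of (a0, a1, a2) \<Rightarrow> case b of (b0, b1, b2) \<Rightarrow>
     (a0 * b0, a0 *\<^sub>R b1 + b0 *\<^sub>R a1,
      (\<lambda>u w. a0 * b2 u w + tprod_vec a1 b1 u w + b0 * a2 u w)))"

text \<open>Inverse in the truncated tensor algebra (for invertible a, i.e. level-0 part nonzero):
  with a = a0 (1 + y), a^{-1} = a0^{-1} (1 - y + y^2).\<close>
definition tinv :: "'v::real_inner talg \<Rightarrow> 'v talg" where
  "tinv a = (case a of (a0, a1, a2) \<Rightarrow>
     (1 / a0, - ((1 / a0 ^ 2) *\<^sub>R a1),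
      (\<lambda>u w. (1 / a0) * (- a2 u w / a0 + tprod_vec a1 a1 u w / a0 ^ 2))))"

definition texp :: "'v::real_inner \<Rightarrow> 'v tens2 \<Rightarrow> 'v talg" where
  "texp v B = (1, v, (\<lambda>u w. B u w + tprod_vec v v u w / 2))"

text \<open>Level-2 part of [V,V] (span of the commutators vw - wv) = antisymmetric tensors.\<close>
definition lie2 :: "'v::real_inner tens2 set" where
  "lie2 = {B. bilinear B \<and> (\<forall>u w. B u w = - B w u)}"

definition G0 :: "'v::real_inner talg set" where
  "G0 = {texp v B | v B. B \<in> lie2}"

definition t2norm :: "'v::euclidean_space tens2 \<Rightarrow> real" where
  "t2norm A = sqrt (\<Sum>i\<in>Basis. \<Sum>j\<in>Basis. (A i j)\<^sup>2)"

text \<open>An element E of Lambda^2 V is represented by its image delta(E) in V(x)V, an antisymmetric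
  tensor (delta(v/\w) = vw - wv). With e_i/\e_j (i<j) orthonormal, ||E||^2 = sum_{i<j} E_ij^2
  = (1/2) sum_{i,j} delta(E)_{ij}^2.  An element 1+E of G_1 is represented by E; its product
  is (1+E)(1+F) = 1+E+F, and delta(1+E) = 1 + delta(E) = (1, 0, E) in T_0.\<close>

definition lam2 :: "'v::real_inner tens2 set" where
  "lam2 = {E. bilinear E \<and> (\<forall>u w. E u w = - E w u)}"

definition lam2norm :: "'v::euclidean_space tens2 \<Rightarrow> real" where
  "lam2norm E = sqrt ((\<Sum>i\<in>Basis. \<Sum>j\<in>Basis. (E i j)\<^sup>2) / 2)"

definition g1mul :: "'v tens2 \<Rightarrow> 'v tens2 \<Rightarrow> 'v tens2" where
  "g1mul E F = (\<lambda>u w. E u w + F u w)"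

definition act :: "'v::real_inner talg \<Rightarrow> 'v tens2 \<Rightarrow> 'v tens2" where
  "act g E = snd (snd (tmul (tmul g (0, 0, E)) (tinv g)))"

definition is_partition :: "real \<Rightarrow> real \<Rightarrow> real list \<Rightarrow> bool" where
  "is_partition a b P \<longleftrightarrow> P \<noteq> [] \<and> hd P = a \<and> last P = b \<and> sorted_wrt (<) P"

definition mesh :: "real list \<Rightarrow> real" where
  "mesh P = Max (set (0 # map (\<lambda>k. P ! (k + 1) - P ! k) [0..<length P - 1]))"

text \<open>Left-point Riemann-Stieltjes sum for int_{a<u1<u2<b} dx_{u1} (x) dx_{u2}
  = int_a^b (x_u - x_a) (x) dx_u, tested against (u, w).\<close>
definition rs_sum2 :: "(real \<Rightarrow> 'v::real_inner) \<Rightarrow> real list \<Rightarrow> 'v \<Rightarrow> 'v \<Rightarrow> real" where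
  "rs_sum2 x P u w =
     (\<Sum>k<length P - 1. ((x (P ! k) - x (P ! 0)) \<bullet> u) * ((x (P ! (k + 1)) - x (P ! k)) \<bullet> w))"

definition S2 :: "(real \<Rightarrow> 'v::real_inner) \<Rightarrow> real \<Rightarrow> real \<Rightarrow> 'v tens2" where
  "S2 x a b = (\<lambda>u w. THE L. \<forall>\<epsilon>>0. \<exists>\<delta>>0. \<forall>P. is_partition a b P \<and> mesh P < \<delta> \<longrightarrow>
                   \<bar>rs_sum2 x P u w - L\<bar> < \<epsilon>)"

definition holder_2d :: "real \<Rightarrow> (real \<times> real \<Rightarrow> 'v::real_normed_vector) \<Rightarrow> bool" where
  "holder_2d \<rho> X \<longleftrightarrow> continuous_on ({0..1} \<times> {0..1}) X \<and>
     (\<exists>C. \<forall>p\<in>{0..1} \<times> {0..1}. \<forall>q\<in>{0..1} \<times> {0..1}. norm (X p - X q) \<le> C * dist p q powr \<rho>)"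

definition xh_of :: "(real \<times> real \<Rightarrow> 'v::real_inner) \<Rightarrow> real \<Rightarrow> real \<Rightarrow> real \<Rightarrow> 'v talg" where
  "xh_of X s1 s2 t = (1, X (s2, t) - X (s1, t), S2 (\<lambda>s. X (s, t)) s1 s2)"

definition xv_of :: "(real \<times> real \<Rightarrow> 'v::real_inner) \<Rightarrow> real \<Rightarrow> real \<Rightarrow> real \<Rightarrow> 'v talg" where
  "xv_of X s t1 t2 = (1, X (s, t2) - X (s, t1), S2 (\<lambda>t. X (s, t)) t1 t2)"

definition XX_of :: "(real \<times> real \<Rightarrow> 'v::real_inner) \<Rightarrow> real \<Rightarrow> real \<Rightarrow> real \<Rightarrow> real \<Rightarrow> 'v tens2" where
  "XX_of X s1 s2 t1 t2 = snd (snd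
     (tmul (tmul (tmul (xh_of X s1 s2 t1) (xv_of X s2 t1 t2)) (tinv (xh_of X s1 s2 t2)))
           (tinv (xv_of X s1 t1 t2))))"

definition fct :: "real \<Rightarrow> real" where
  "fct x = Gamma (x + 1)"

definition omega :: "real \<Rightarrow> real \<Rightarrow> real \<Rightarrow> real" where
  "omega C a b = C * \<bar>b - a\<bar>"

definition beta_bound :: "real \<Rightarrow> real" where
  "beta_bound \<rho> = max
     (2 / \<rho>\<^sup>2 * (1 + (\<Sum>n. (2 / (real n + 1)) powr (\<rho> * (of_int \<lfloor>1 / \<rho>\<rfloor> + 1)))))
     (3 / 2 * (\<Sum>m. 4 powr (real m * (1 - (of_int \<lfloor>2 / \<rho>\<rfloor> + 1) * \<rho>))))"

definition Wk :: "real \<Rightarrow> real \<Rightarrow> nat \<Rightarrow> real \<Rightarrow> real \<Rightarrow> real \<Rightarrow> real \<Rightarrow> real" where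
  "Wk C \<sigma> k s1 s2 t1 t2 = 2 powr (2 * real k * \<sigma>) *
     (\<Sum>q=1..2*k-1. omega C s1 s2 powr (real q * \<sigma>) * omega C t1 t2 powr (real (2*k-q) * \<sigma>)
        / (fct (real q * \<sigma>) * fct (real (2*k-q) * \<sigma>)))"

definition double_group_functional ::
  "(real \<Rightarrow> real \<Rightarrow> real \<Rightarrow> 'v::real_inner talg) \<Rightarrow> (real \<Rightarrow> real \<Rightarrow> real \<Rightarrow> 'v talg)
   \<Rightarrow> (real \<Rightarrow> real \<Rightarrow> real \<Rightarrow> real \<Rightarrow> 'v tens2) \<Rightarrow> bool" where
  "double_group_functional xh xv XX \<longleftrightarrow>
    (\<forall>s1 s2 t. 0 \<le> s1 \<and> s1 \<le> s2 \<and> s2 \<le> 1 \<and> 0 \<le> t \<and> t \<le> 1 \<longrightarrow> xh s1 s2 t \<in> G0) \<and>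
    (\<forall>s t1 t2. 0 \<le> s \<and> s \<le> 1 \<and> 0 \<le> t1 \<and> t1 \<le> t2 \<and> t2 \<le> 1 \<longrightarrow> xv s t1 t2 \<in> G0) \<and>
    (\<forall>s1 s2 t1 t2. 0 \<le> s1 \<and> s1 \<le> s2 \<and> s2 \<le> 1 \<and> 0 \<le> t1 \<and> t1 \<le> t2 \<and> t2 \<le> 1 \<longrightarrow>
        XX s1 s2 t1 t2 \<in> lam2) \<and>
    (\<forall>s1 s2 s3 t. 0 \<le> s1 \<and> s1 \<le> s2 \<and> s2 \<le> s3 \<and> s3 \<le> 1 \<and> 0 \<le> t \<and> t \<le> 1 \<longrightarrow>
        tmul (xh s1 s2 t) (xh s2 s3 t) = xh s1 s3 t) \<and>
    (\<forall>s t1 t2 t3. 0 \<le> s \<and> s \<le> 1 \<and> 0 \<le> t1 \<and> t1 \<le> t2 \<and> t2 \<le> t3 \<and> t3 \<le> 1 \<longrightarrow>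
        tmul (xv s t1 t2) (xv s t2 t3) = xv s t1 t3) \<and>
    (\<forall>s1 s2 t1 t2. 0 \<le> s1 \<and> s1 \<le> s2 \<and> s2 \<le> 1 \<and> 0 \<le> t1 \<and> t1 \<le> t2 \<and> t2 \<le> 1 \<longrightarrow>
        (1, 0, XX s1 s2 t1 t2) =
          tmul (tmul (tmul (xh s1 s2 t1) (xv s2 t1 t2)) (tinv (xh s1 s2 t2))) (tinv (xv s1 t1 t2)))"

definition multiplicative_dgf ::
  "(real \<Rightarrow> real \<Rightarrow> real \<Rightarrow> 'v::real_inner talg) \<Rightarrow> (real \<Rightarrow> real \<Rightarrow> real \<Rightarrow> 'v talg)
   \<Rightarrow> (real \<Rightarrow> real \<Rightarrow> real \<Rightarrow> real \<Rightarrow> 'v tens2) \<Rightarrow> bool" where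
  "multiplicative_dgf xh xv XX \<longleftrightarrow>
    (\<forall>s1 s2 s3 t1 t2. 0 \<le> s1 \<and> s1 \<le> s2 \<and> s2 \<le> s3 \<and> s3 \<le> 1 \<and> 0 \<le> t1 \<and> t1 \<le> t2 \<and> t2 \<le> 1 \<longrightarrow>
        XX s1 s3 t1 t2 = g1mul (act (xh s1 s2 t1) (XX s2 s3 t1 t2)) (XX s1 s2 t1 t2)) \<and>
    (\<forall>s1 s2 t1 t2 t3. 0 \<le> s1 \<and> s1 \<le> s2 \<and> s2 \<le> 1 \<and> 0 \<le> t1 \<and> t1 \<le> t2 \<and> t2 \<le> t3 \<and> t3 \<le> 1 \<longrightarrow>
        XX s1 s2 t1 t3 = g1mul (XX s1 s2 t1 t2) (act (xv s1 t1 t2) (XX s1 s2 t2 t3)))"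

definition lvlnorm :: "nat \<Rightarrow> 'v::euclidean_space talg \<Rightarrow> real" where
  "lvlnorm k g = (if k = 1 then norm (fst (snd g)) else t2norm (snd (snd g)))"

definition lvldiff :: "'v::euclidean_space talg \<Rightarrow> 'v talg \<Rightarrow> 'v talg" where
  "lvldiff g h = (fst g - fst h, fst (snd g) - fst (snd h), (\<lambda>u w. snd (snd g) u w - snd (snd h) u w))"

definition rho_holder_dgf ::
  "real \<Rightarrow> real \<Rightarrow> real \<Rightarrow> (real \<Rightarrow> real \<Rightarrow> real \<Rightarrow> 'v::euclidean_space talg)
   \<Rightarrow> (real \<Rightarrow> real \<Rightarrow> real \<Rightarrow> 'v talg) \<Rightarrow> (real \<Rightarrow> real \<Rightarrow> real \<Rightarrow> real \<Rightarrow> 'v tens2) \<Rightarrow> bool" where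
  "rho_holder_dgf \<rho> \<beta> C xh xv XX \<longleftrightarrow> (let \<sigma> = \<rho> / 2 in
    (\<forall>k\<in>{1, 2::nat}.
      (\<forall>s1 s2 t. 0 \<le> s1 \<and> s1 \<le> s2 \<and> s2 \<le> 1 \<and> 0 \<le> t \<and> t \<le> 1 \<longrightarrow>
         lvlnorm k (xh s1 s2 t) \<le> omega C s1 s2 powr (real k * \<rho>) / (\<beta> * fct (real k * \<rho>))) \<and>
      (\<forall>s t1 t2. 0 \<le> s \<and> s \<le> 1 \<and> 0 \<le> t1 \<and> t1 \<le> t2 \<and> t2 \<le> 1 \<longrightarrow>
         lvlnorm k (xv s t1 t2) \<le> omega C t1 t2 powr (real k * \<rho>) / (\<beta> * fct (real k * \<rho>))) \<and>
      (\<forall>s1 s2 t1 t2. 0 \<le> s1 \<and> s1 \<le> s2 \<and> s2 \<le> 1 \<and> 0 \<le> t1 \<and> t1 \<le> 1 \<and> 0 \<le> t2 \<and> t2 \<le> 1 \<longrightarrow>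
         lvlnorm k (lvldiff (xh s1 s2 t1) (xh s1 s2 t2)) \<le>
           omega C s1 s2 powr ((2 * real k - 1) * \<sigma>) * omega C t1 t2 powr \<sigma>
             / (\<beta> * fct ((2 * real k - 1) * \<sigma>) * fct \<sigma>)) \<and>
      (\<forall>s1 s2 t1 t2. 0 \<le> t1 \<and> t1 \<le> t2 \<and> t2 \<le> 1 \<and> 0 \<le> s1 \<and> s1 \<le> 1 \<and> 0 \<le> s2 \<and> s2 \<le> 1 \<longrightarrow>
         lvlnorm k (lvldiff (xv s1 t1 t2) (xv s2 t1 t2)) \<le>
           omega C t1 t2 powr ((2 * real k - 1) * \<sigma>) * omega C s1 s2 powr \<sigma>
             / (\<beta> * fct ((2 * real k - 1) * \<sigma>) * fct \<sigma>))) \<and>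
    (\<forall>s1 s2 t1 t2. 0 \<le> s1 \<and> s1 \<le> s2 \<and> s2 \<le> 1 \<and> 0 \<le> t1 \<and> t1 \<le> t2 \<and> t2 \<le> 1 \<longrightarrow>
         lam2norm (XX s1 s2 t1 t2) \<le> Wk C \<sigma> 2 s1 s2 t1 t2 / \<beta>))"

end

(*
  Since the level-0 part of every horizontal and vertical element is 1, the action of G_0 on
  G_1 is trivial after truncation at level two, and all algebraic identities reduce to Chen's
  relation and the integration-by-parts formula for the level-2 signature of the rows and
  columns of X; these come from realising S^(2) by the sewing lemma (rho > 1/2).
  The Hoelder bounds follow from the sewing estimate, with two extra ingredients: the
  rectangular increment of X is bounded by the geometric mean of its row and column bounds,
  i.e. by 2H |s2 - s1|^(rho/2) |t2 - t1|^(rho/2), and the difference of the level-2 signatures of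
  two rows is again a sewing limit, now with exponent 3 rho / 2 > 1, which is where rho > 2/3
  enters. Finally the constant of the control omega is chosen large enough to absorb every
  constant and every Gamma factor.
*)

theory Submission
  imports Defs
begin

section \<open>Riemann sums along partitions\<close>

fun riemann_sum :: "(real \<Rightarrow> real \<Rightarrow> real) \<Rightarrow> real list \<Rightarrow> real" where
  "riemann_sum \<Xi> (x # y # zs) = \<Xi> x y + riemann_sum \<Xi> (y # zs)"
| "riemann_sum \<Xi> _ = 0"

lemma riemann_sum_conv_sum: "riemann_sum \<Xi> P = (\<Sum>k<length P - 1. \<Xi> (P ! k) (P ! (k + 1)))"
proof (induction \<Xi> P rule: riemann_sum.induct)
  case (1 \<Xi> x y zs)
  have "(\<Sum>k<length (x # y # zs) - 1. \<Xi> ((x # y # zs) ! k) ((x # y # zs) ! (k + 1)))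
      = \<Xi> x y + (\<Sum>k<length (y # zs) - 1. \<Xi> ((y # zs) ! k) ((y # zs) ! (k + 1)))"
    by (simp add: sum.lessThan_Suc_shift del: sum.lessThan_Suc)
  then show ?case using 1 by simp
qed auto

lemma riemann_sum_append: "riemann_sum \<Xi> (L @ y # M) = riemann_sum \<Xi> (L @ [y]) + riemann_sum \<Xi> (y # M)"
  by (induction L rule: induct_list012) auto

lemma riemann_sum_add: "riemann_sum (\<lambda>s t. F s t + G s t) P = riemann_sum F P + riemann_sum G P"
  by (induction F P rule: riemann_sum.induct) auto

lemma riemann_sum_diff: "riemann_sum (\<lambda>s t. F s t - G s t) P = riemann_sum F P - riemann_sum G P"
  by (induction F P rule: riemann_sum.induct) auto

lemma riemann_sum_cmult: "riemann_sum (\<lambda>s t. k * F s t) P = k * riemann_sum F P"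
  by (induction F P rule: riemann_sum.induct) (auto simp: algebra_simps)

lemma riemann_sum_telescope: "P \<noteq> [] \<Longrightarrow> riemann_sum (\<lambda>s t. f t - f s) P = f (last P) - f (hd P)"
  by (induction "\<lambda>s t. f t - f s :: real" P rule: riemann_sum.induct) auto

lemma riemann_sum_remove:
  "riemann_sum \<Xi> (L @ p # q # r # M) = riemann_sum \<Xi> (L @ p # r # M) + (\<Xi> p q + \<Xi> q r - \<Xi> p r)"
  using riemann_sum_append[of \<Xi> L p "q # r # M"] riemann_sum_append[of \<Xi> L p "r # M"] by simp

lemma is_partition_Nil [simp]: "\<not> is_partition a b []"
  by (simp add: is_partition_def)

lemma is_partition_singleton_iff: "is_partition a b [x] \<longleftrightarrow> x = a \<and> a = b"
  by (auto simp: is_partition_def)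

lemma sorted_wrt_less_hd_le: "sorted_wrt (<) R \<Longrightarrow> x \<in> set R \<Longrightarrow> hd R \<le> (x::real)"
  by (cases R) auto

lemma sorted_wrt_less_le_last: "sorted_wrt (<) R \<Longrightarrow> x \<in> set R \<Longrightarrow> x \<le> last (R::real list)"
  by (induction R) (auto simp: less_imp_le)

lemma is_partition_mem: "is_partition a b P \<Longrightarrow> x \<in> set P \<Longrightarrow> a \<le> x \<and> x \<le> b"
  unfolding is_partition_def using sorted_wrt_less_hd_le sorted_wrt_less_le_last by blast

lemma is_partition_le: "is_partition a b P \<Longrightarrow> a \<le> b"
  using is_partition_mem[of a b P "hd P"] by (auto simp: is_partition_def)

lemma is_partition_Cons_Cons_iff:
  "is_partition a b (x # y # zs) \<longleftrightarrow> x = a \<and> x < y \<and> is_partition y b (y # zs)"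
proof
  assume "x = a \<and> x < y \<and> is_partition y b (y # zs)"
  moreover from this have "\<forall>z\<in>set zs. y \<le> z" using is_partition_mem by fastforce
  ultimately show "is_partition a b (x # y # zs)" by (auto simp: is_partition_def)
qed (auto simp: is_partition_def)

lemma is_partition_same_ends: "is_partition a a P \<Longrightarrow> P = [a]"
  by (cases P rule: remdups_adj.cases)
    (auto simp: is_partition_singleton_iff is_partition_Cons_Cons_iff dest: is_partition_le)

lemma is_partition_nth:
  assumes "is_partition a b P"
  shows "P ! 0 = a" "P ! (length P - 1) = b" "i < length P \<Longrightarrow> a \<le> P ! i \<and> P ! i \<le> b"
  using assms is_partition_mem[OF assms nth_mem]
  by (auto simp: is_partition_def hd_conv_nth last_conv_nth)

lemma is_partition_remove:
  assumes "is_partition a b (L @ p # q # r # M)"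
  shows "is_partition a b (L @ p # r # M)" "a \<le> p" "p \<le> q" "q \<le> r" "r \<le> b"
proof -
  show "is_partition a b (L @ p # r # M)"
    using assms unfolding is_partition_def by (cases L) (auto simp: sorted_wrt_append)
  show "p \<le> q" "q \<le> r"
    using assms unfolding is_partition_def by (auto simp: sorted_wrt_append)
  show "a \<le> p" "r \<le> b" using is_partition_mem[OF assms] by auto
qed

lemma is_partition_append:
  assumes "is_partition a b P1" "is_partition b c P2"
  obtains T M where "P1 = T @ [b]" "P2 = b # M" "is_partition a c (T @ b # M)"
proof -
  obtain T where T: "P1 = T @ [b]"
    using assms(1) unfolding is_partition_def by (metis append_butlast_last_id)
  obtain M where M: "P2 = b # M"
    using assms(2) unfolding is_partition_def by (metis hd_Cons_tl)
  have "sorted_wrt (<) (T @ b # M)"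
    using assms T M unfolding is_partition_def
    by (auto simp: sorted_wrt_append) (meson order.strict_trans)
  then have "is_partition a c (T @ b # M)"
    using assms T M unfolding is_partition_def by (cases T) auto
  then show ?thesis using that T M by blast
qed

lemma is_partition_union:
  assumes "is_partition a b P" "is_partition a b Q"
  shows "is_partition a b (sorted_list_of_set (set P \<union> set Q))"
proof -
  let ?R = "sorted_list_of_set (set P \<union> set Q)"
  have ab: "a \<in> set P" "b \<in> set P"
    using assms(1) unfolding is_partition_def by (auto intro: hd_in_set last_in_set)
  have bounds: "a \<le> x \<and> x \<le> b" if "x \<in> set ?R" for x
    using that is_partition_mem[OF assms(1)] is_partition_mem[OF assms(2)] by auto
  have "?R \<noteq> []" "sorted_wrt (<) ?R" using ab by auto
  moreover have "a \<in> set ?R" "b \<in> set ?R" using ab by auto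
  ultimately have "hd ?R = a" "last ?R = b"
    using bounds hd_in_set last_in_set sorted_wrt_less_hd_le sorted_wrt_less_le_last
    by (metis order_antisym)+
  with \<open>?R \<noteq> []\<close> \<open>sorted_wrt (<) ?R\<close> show ?thesis unfolding is_partition_def by blast
qed

lemma mesh_singleton [simp]: "mesh [x] = 0"
  by (simp add: mesh_def)

lemma mesh_Cons_Cons [simp]: "mesh (x # y # zs) = max (y - x) (mesh (y # zs))"
proof -
  define g where "g k = (y # zs) ! (k + 1) - (y # zs) ! k" for k
  have "[0..<length (x # y # zs) - 1] = 0 # map Suc [0..<length (y # zs) - 1]"
    by (simp add: upt_conv_Cons map_Suc_upt del: upt_Suc)
  then have "mesh (x # y # zs) = Max (insert (y - x) (insert 0 (set (map g [0..<length zs]))))"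
    unfolding mesh_def g_def by (simp add: insert_commute)
  then show ?thesis unfolding mesh_def g_def by simp
qed

lemma mesh_nonneg: "0 \<le> mesh P"
  unfolding mesh_def by (rule Max_ge) auto

lemma mesh_append: "mesh (T @ y # M) = max (mesh (T @ [y])) (mesh (y # M))"
proof (induction T rule: induct_list012)
  case 1
  then show ?case using mesh_nonneg[of "y # M"] by simp
next
  case (2 x)
  then show ?case using mesh_nonneg[of "y # M"] by (simp add: max_def)
next
  case (3 x z T)
  then show ?case by (simp add: max.assoc)
qed

lemma mesh_le:
  assumes "0 \<le> h" "\<And>k. k < length P - 1 \<Longrightarrow> P ! (k + 1) - P ! k \<le> h"
  shows "mesh P \<le> h"
  using assms unfolding mesh_def by (auto simp: Max_le_iff)

definition uniform_partition :: "real \<Rightarrow> real \<Rightarrow> nat \<Rightarrow> real list" where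
  "uniform_partition a b n = map (\<lambda>k. a + (b - a) * real k / real n) [0..<n + 1]"

lemma uniform_partition_props:
  assumes "a < b" "0 < n"
  shows "is_partition a b (uniform_partition a b n)" "mesh (uniform_partition a b n) \<le> (b - a) / n"
proof -
  have "sorted_wrt (<) (uniform_partition a b n)"
    unfolding uniform_partition_def sorted_wrt_map
    by (rule sorted_wrt_mono_rel[OF _ sorted_wrt_upt])
      (use assms in \<open>auto simp: divide_strict_right_mono\<close>)
  then show "is_partition a b (uniform_partition a b n)"
    using assms unfolding is_partition_def uniform_partition_def
    by (simp add: hd_map last_map upt_conv_Cons)
  have len: "length (uniform_partition a b n) = n + 1"
    unfolding uniform_partition_def by simp
  have nth: "uniform_partition a b n ! k = a + (b - a) * real k / real n" if "k \<le> n" for k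
    unfolding uniform_partition_def using that by (simp del: upt_Suc add: nth_map)
  have "uniform_partition a b n ! (k + 1) - uniform_partition a b n ! k = (b - a) / n"
    if "k < n" for k
    using that assms by (simp add: nth add_divide_distrib diff_divide_distrib algebra_simps)
  then show "mesh (uniform_partition a b n) \<le> (b - a) / n"
    using assms by (intro mesh_le) (auto simp: len)
qed

lemma exists_partition_mesh_less:
  assumes "a \<le> b" "0 < \<delta>"
  shows "\<exists>P. is_partition a b P \<and> mesh P < \<delta>"
proof (cases "a = b")
  case True
  then show ?thesis using assms by (intro exI[of _ "[a]"]) (simp add: is_partition_singleton_iff)
next
  case False
  then have "0 < b - a" using assms by simp
  obtain n :: nat where n: "(b - a) / \<delta> < n" using reals_Archimedean2 by blast
  moreover have "0 < (b - a) / \<delta>" using \<open>0 < b - a\<close> assms by simp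
  ultimately have "0 < real n" by linarith
  moreover have "b - a < n * \<delta>" using n assms by (simp add: pos_divide_less_eq)
  ultimately have "0 < n" "(b - a) / n < \<delta>" by (simp_all add: divide_less_eq mult.commute)
  then show ?thesis using uniform_partition_props[of a b n] \<open>0 < b - a\<close>
    by (intro exI[of _ "uniform_partition a b n"]) auto
qed

lemma is_partition_split:
  assumes "is_partition a b R" "p \<in> set R"
  obtains T D where "R = T @ p # D" "is_partition a p (T @ [p])" "is_partition p b (p # D)"
    "\<And>x. x \<in> set R \<Longrightarrow> p \<le> x \<Longrightarrow> x \<in> set (p # D)"
proof -
  obtain T D where R: "R = T @ p # D" using assms(2) by (meson split_list)
  have "sorted_wrt (<) (T @ p # D)" using assms(1) R unfolding is_partition_def by simp
  then have "\<forall>x\<in>set T. x < p" "sorted_wrt (<) (T @ [p])" "sorted_wrt (<) (p # D)"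
    by (auto simp: sorted_wrt_append)
  moreover have "hd (T @ [p]) = a"
    using assms(1) R unfolding is_partition_def by (cases T) auto
  ultimately show ?thesis
    using that[OF R] assms(1) R unfolding is_partition_def by fastforce
qed

lemma riemann_sum_abs_le:
  assumes "is_partition a b P" "\<And>s t. a \<le> s \<Longrightarrow> s \<le> t \<Longrightarrow> t \<le> b \<Longrightarrow> \<bar>F s t\<bar> \<le> G s t"
  shows "\<bar>riemann_sum F P\<bar> \<le> riemann_sum G P"
  using assms
proof (induction F P arbitrary: a rule: riemann_sum.induct)
  case (1 F x y zs)
  then have "\<bar>F x y\<bar> \<le> G x y" "\<bar>riemann_sum F (y # zs)\<bar> \<le> riemann_sum G (y # zs)"
    using is_partition_le[of y b] by (auto simp: is_partition_Cons_Cons_iff)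
  then show ?case by simp
qed auto

lemma riemann_sum_powr_le_mesh:
  assumes "is_partition a b P" "1 \<le> \<theta>"
  shows "riemann_sum (\<lambda>s t. (t - s) powr \<theta>) P \<le> mesh P powr (\<theta> - 1) * (b - a)"
  using assms
proof (induction "\<lambda>s t. (t - s) powr \<theta>" P arbitrary: a rule: riemann_sum.induct)
  case (1 x y zs)
  then have xy: "x = a" "x < y" "is_partition y b (y # zs)"
    by (auto simp: is_partition_Cons_Cons_iff)
  define h where "h = mesh (x # y # zs) powr (\<theta> - 1)"
  have "(y - x) powr \<theta> = (y - x) powr (\<theta> - 1) * (y - x)"
    using xy by (simp add: powr_diff)
  also have "\<dots> \<le> h * (y - x)"
    unfolding h_def using xy assms by (intro mult_right_mono powr_mono2) auto
  finally have first: "(y - x) powr \<theta> \<le> h * (y - x)" .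
  have "riemann_sum (\<lambda>s t. (t - s) powr \<theta>) (y # zs) \<le> mesh (y # zs) powr (\<theta> - 1) * (b - y)"
    using "1.hyps"[OF xy(3) "1.prems"(2)] .
  also have "\<dots> \<le> h * (b - y)"
    unfolding h_def using assms mesh_nonneg[of "y # zs"] is_partition_le[OF xy(3)]
    by (intro mult_right_mono powr_mono2) auto
  finally have "riemann_sum (\<lambda>s t. (t - s) powr \<theta>) (x # y # zs) \<le> h * (y - x) + h * (b - y)"
    using first by simp
  then show ?case unfolding h_def xy(1) by (simp add: algebra_simps)
qed (auto simp: is_partition_singleton_iff)

section \<open>The sewing lemma\<close>

definition sewing_condition :: "real \<Rightarrow> real \<Rightarrow> real \<Rightarrow> real \<Rightarrow> (real \<Rightarrow> real \<Rightarrow> real) \<Rightarrow> bool" where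
  "sewing_condition a b c \<theta> \<Xi> \<longleftrightarrow>
     (\<forall>s u t. a \<le> s \<longrightarrow> s \<le> u \<longrightarrow> u \<le> t \<longrightarrow> t \<le> b \<longrightarrow> \<bar>\<Xi> s t - \<Xi> s u - \<Xi> u t\<bar> \<le> c * (t - s) powr \<theta>)"

lemma sewing_conditionD:
  "sewing_condition a b c \<theta> \<Xi> \<Longrightarrow> a \<le> s \<Longrightarrow> s \<le> u \<Longrightarrow> u \<le> t \<Longrightarrow> t \<le> b \<Longrightarrow>
     \<bar>\<Xi> s t - \<Xi> s u - \<Xi> u t\<bar> \<le> c * (t - s) powr \<theta>"
  unfolding sewing_condition_def by blast

lemma sewing_condition_mono:
  "sewing_condition a b c \<theta> \<Xi> \<Longrightarrow> a \<le> a' \<Longrightarrow> b' \<le> b \<Longrightarrow> sewing_condition a' b' c \<theta> \<Xi>"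
  unfolding sewing_condition_def by force

definition sewing_sum :: "real \<Rightarrow> nat \<Rightarrow> real" where
  "sewing_sum \<theta> n = (\<Sum>r=1..n. (2 / real r) powr \<theta>)"

definition sewing_constant :: "real \<Rightarrow> real" where
  "sewing_constant \<theta> = (\<Sum>n. (2 / (real n + 1)) powr \<theta>)"

lemma summable_sewing_constant:
  assumes "1 < \<theta>" shows "summable (\<lambda>n. (2 / (real n + 1)) powr \<theta>)"
proof -
  have "summable (\<lambda>n. real (Suc n) powr (-\<theta>))"
    using summable_real_powr_iff assms by (subst summable_Suc_iff) simp
  moreover have "(2 / (real n + 1)) powr \<theta> = 2 powr \<theta> * real (Suc n) powr (-\<theta>)" for n
    by (subst powr_divide) (auto simp: powr_minus divide_inverse add.commute)
  ultimately show ?thesis by (simp add: summable_mult)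
qed

lemma sewing_sum_le_constant:
  assumes "1 < \<theta>" shows "sewing_sum \<theta> n \<le> sewing_constant \<theta>"
proof -
  have "sewing_sum \<theta> n = (\<Sum>i<n. (2 / (real i + 1)) powr \<theta>)"
    unfolding sewing_sum_def by (induction n) (simp_all add: sum.cl_ivl_Suc add.commute)
  also have "\<dots> \<le> sewing_constant \<theta>"
    unfolding sewing_constant_def by (rule sum_le_suminf[OF summable_sewing_constant[OF assms]]) auto
  finally show ?thesis .
qed

lemma sewing_constant_nonneg: "1 < \<theta> \<Longrightarrow> 0 \<le> sewing_constant \<theta>"
  using sewing_sum_le_constant[of \<theta> 0] by (simp add: sewing_sum_def)

text \<open>Pigeonhole: the \<open>m - 1\<close> double steps of a partition with \<open>m\<close> steps have total length at most
  \<open>2 (b - a)\<close>, so one of them is short.\<close>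

lemma partition_short_double_step:
  assumes P: "is_partition a b P" and m: "length P = m + 1" "2 \<le> m"
  shows "\<exists>k. 1 \<le> k \<and> k \<le> m - 1 \<and> P ! (k + 1) - P ! (k - 1) \<le> 2 * (b - a) / real (m - 1)"
proof (rule ccontr)
  assume "\<not> ?thesis"
  then have "(\<Sum>k=1..m-1. 2 * (b - a) / real (m - 1)) < (\<Sum>k=1..m-1. P ! (k + 1) - P ! (k - 1))"
    using m by (intro sum_strict_mono) force+
  also have "\<dots> = (\<Sum>k=1..m-1. P ! Suc k - P ! k) + (\<Sum>k=Suc 0..m-1. P ! k - P ! (k - 1))"
    by (simp add: sum.distrib[symmetric])
  also have "\<dots> = (P ! m - P ! 1) + (P ! (m - 1) - P ! 0)"
    using m sum_telescope''[of 0 "m - 1" "\<lambda>k. P ! k"] by (simp add: sum_Suc_diff)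
  also have "\<dots> \<le> 2 * (b - a)"
  proof -
    have "P ! m = b" "P ! 0 = a" using is_partition_nth(1,2)[OF P] m by auto
    moreover have "a \<le> P ! 1" "P ! (m - 1) \<le> b" using is_partition_nth(3)[OF P] m by auto
    ultimately show ?thesis by argo
  qed
  finally show False using m by simp
qed

lemma sewing_remove_point:
  assumes P: "is_partition a b P" and m: "length P = m + 1" "2 \<le> m"
    and \<Xi>: "sewing_condition a b c \<theta> \<Xi>" and c: "0 \<le> c" and \<theta>: "0 \<le> \<theta>"
  obtains P' where "is_partition a b P'" "length P' = m"
    "\<bar>riemann_sum \<Xi> P - riemann_sum \<Xi> P'\<bar> \<le> c * ((b - a) powr \<theta> * (2 / real (m - 1)) powr \<theta>)"
proof -
  obtain k where k: "1 \<le> k" "k \<le> m - 1" "P ! (k + 1) - P ! (k - 1) \<le> 2 * (b - a) / real (m - 1)"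
    using partition_short_double_step[OF P m] by blast
  define p q r where "p = P ! (k - 1)" and "q = P ! k" and "r = P ! (k + 1)"
  have "drop (k - 1) P = p # q # r # drop (k + 2) P"
    using k m Cons_nth_drop_Suc[of "k - 1" P] Cons_nth_drop_Suc[of k P] Cons_nth_drop_Suc[of "k + 1" P]
    unfolding p_def q_def r_def by (simp add: Suc_diff_le)
  then have Pe: "P = take (k - 1) P @ p # q # r # drop (k + 2) P"
    by (metis append_take_drop_id)
  define P' where "P' = take (k - 1) P @ p # r # drop (k + 2) P"
  have "is_partition a b (take (k - 1) P @ p # q # r # drop (k + 2) P)" using P Pe by simp
  note ord = is_partition_remove[OF this, folded P'_def]
  have "length P' + 1 = length P" unfolding P'_def by (subst (2) Pe) simp
  then have "length P' = m" using m by simp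
  have "(r - p) powr \<theta> \<le> ((b - a) * (2 / real (m - 1))) powr \<theta>"
    using k(3) ord \<theta> unfolding p_def r_def
    by (intro powr_mono2) (auto simp: times_divide_eq_right mult.commute)
  also have "\<dots> = (b - a) powr \<theta> * (2 / real (m - 1)) powr \<theta>"
    by (rule powr_mult)
  finally have "c * (r - p) powr \<theta> \<le> c * ((b - a) powr \<theta> * (2 / real (m - 1)) powr \<theta>)"
    using c by (rule mult_left_mono)
  then have "\<bar>\<Xi> p r - \<Xi> p q - \<Xi> q r\<bar> \<le> c * ((b - a) powr \<theta> * (2 / real (m - 1)) powr \<theta>)"
    using sewing_conditionD[OF \<Xi>] ord by fastforce
  moreover have "riemann_sum \<Xi> P = riemann_sum \<Xi> P' + (\<Xi> p q + \<Xi> q r - \<Xi> p r)"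
    unfolding P'_def by (subst Pe) (rule riemann_sum_remove)
  ultimately show ?thesis using that[OF ord(1) \<open>length P' = m\<close>] by simp
qed

lemma sewing_partition_bound:
  assumes "sewing_condition a b c \<theta> \<Xi>" "0 \<le> c" "0 \<le> \<theta>" "is_partition a b P"
  shows "\<bar>riemann_sum \<Xi> P - \<Xi> a b\<bar> \<le> c * (b - a) powr \<theta> * sewing_sum \<theta> (length P - 2)"
  using assms(4)
proof (induction "length P" arbitrary: P rule: less_induct)
  case less
  obtain m where m: "length P = m + 1"
    using less.prems by (metis Suc_eq_plus1 is_partition_Nil length_greater_0_conv less_imp_Suc_add)
  consider "m = 0" | "m = 1" | "2 \<le> m" by linarith
  then show ?case
  proof cases
    case 1
    then have "P = [a]" "a = b" using m less.prems
      by (auto simp: length_Suc_conv is_partition_singleton_iff)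
    then show ?thesis using sewing_conditionD[OF assms(1), of a a a] by simp
  next
    case 2
    then have "P = [a, b]" using m less.prems
      by (auto simp: length_Suc_conv is_partition_Cons_Cons_iff is_partition_singleton_iff)
    then show ?thesis by (simp add: sewing_sum_def)
  next
    case 3
    obtain P' where P': "is_partition a b P'" "length P' = m"
      "\<bar>riemann_sum \<Xi> P - riemann_sum \<Xi> P'\<bar> \<le> c * ((b - a) powr \<theta> * (2 / real (m - 1)) powr \<theta>)"
      using sewing_remove_point[OF less.prems m 3 assms(1-3)] by blast
    obtain n where "m = n + 2" using 3 by (metis add.commute le_Suc_ex)
    then have "sewing_sum \<theta> (m - 1) = sewing_sum \<theta> (m - 2) + (2 / real (m - 1)) powr \<theta>"
      by (simp add: sewing_sum_def sum.cl_ivl_Suc)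
    moreover have "\<bar>riemann_sum \<Xi> P' - \<Xi> a b\<bar> \<le> c * (b - a) powr \<theta> * sewing_sum \<theta> (m - 2)"
      using less.hyps[OF _ P'(1)] P' m by simp
    ultimately show ?thesis
      using P'(3) m by (simp add: algebra_simps) arith
  qed
qed

lemma sewing_bound:
  assumes "sewing_condition a b c \<theta> \<Xi>" "0 \<le> c" "1 < \<theta>" "is_partition a b P"
  shows "\<bar>riemann_sum \<Xi> P - \<Xi> a b\<bar> \<le> c * sewing_constant \<theta> * (b - a) powr \<theta>"
proof -
  have "\<bar>riemann_sum \<Xi> P - \<Xi> a b\<bar> \<le> c * (b - a) powr \<theta> * sewing_sum \<theta> (length P - 2)"
    using sewing_partition_bound assms by force
  also have "\<dots> \<le> c * (b - a) powr \<theta> * sewing_constant \<theta>"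
    using assms by (intro mult_left_mono sewing_sum_le_constant) auto
  finally show ?thesis by (simp add: mult_ac)
qed

lemma riemann_sum_refinement:
  assumes \<Xi>: "sewing_condition a b c \<theta> \<Xi>" and "0 \<le> c" "1 < \<theta>"
    and "is_partition a b P" "is_partition a b R" "set P \<subseteq> set R"
  shows "\<bar>riemann_sum \<Xi> R - riemann_sum \<Xi> P\<bar>
           \<le> c * sewing_constant \<theta> * riemann_sum (\<lambda>s t. (t - s) powr \<theta>) P"
  using assms(4-6) \<Xi>
proof (induction P arbitrary: a R rule: induct_list012)
  case (2 x)
  then show ?case by (auto simp: is_partition_singleton_iff dest: is_partition_same_ends)
next
  case (3 p0 p1 P')
  then have p: "p0 = a" "is_partition p1 b (p1 # P')"
    by (auto simp: is_partition_Cons_Cons_iff)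
  have "p1 \<in> set R" using "3.prems"(3) by simp
  then obtain T D where R: "R = T @ p1 # D" "is_partition a p1 (T @ [p1])" "is_partition p1 b (p1 # D)"
      and R_tail: "\<And>x. x \<in> set R \<Longrightarrow> p1 \<le> x \<Longrightarrow> x \<in> set (p1 # D)"
    using is_partition_split[OF "3.prems"(2)] by blast
  have "set (p1 # P') \<subseteq> set (p1 # D)"
    using R_tail "3.prems"(3) is_partition_mem[OF p(2)] by auto
  moreover have "a \<le> p1" using is_partition_le[OF R(2)] .
  ultimately have IH: "\<bar>riemann_sum \<Xi> (p1 # D) - riemann_sum \<Xi> (p1 # P')\<bar>
      \<le> c * sewing_constant \<theta> * riemann_sum (\<lambda>s t. (t - s) powr \<theta>) (p1 # P')"
    using "3.IH"(2)[OF p(2) R(3)] sewing_condition_mono[OF "3.prems"(4)] by simp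
  have "\<bar>riemann_sum \<Xi> (T @ [p1]) - \<Xi> a p1\<bar> \<le> c * sewing_constant \<theta> * (p1 - a) powr \<theta>"
    using sewing_bound[OF sewing_condition_mono[OF "3.prems"(4)] assms(2,3) R(2)]
      is_partition_le[OF p(2)] by simp
  moreover have "riemann_sum \<Xi> R = riemann_sum \<Xi> (T @ [p1]) + riemann_sum \<Xi> (p1 # D)"
    unfolding R(1) by (rule riemann_sum_append)
  ultimately show ?case using IH p(1) by (simp add: distrib_left)
qed simp

section \<open>Limits of Riemann sums along fine partitions\<close>

definition fine_partitions :: "real \<Rightarrow> real \<Rightarrow> real list filter" where
  "fine_partitions a b = (INF \<delta>\<in>{0<..}. principal {P. is_partition a b P \<and> mesh P < \<delta>})"

lemma eventually_fine_partitions: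
  "eventually Q (fine_partitions a b) \<longleftrightarrow> (\<exists>\<delta>>0. \<forall>P. is_partition a b P \<longrightarrow> mesh P < \<delta> \<longrightarrow> Q P)"
proof -
  let ?F = "\<lambda>\<delta>. principal {P. is_partition a b P \<and> mesh P < \<delta>}"
  have "\<exists>\<epsilon>\<in>{0<..}. ?F \<epsilon> \<le> inf (?F \<delta>) (?F \<delta>')" if "\<delta> \<in> {0<..}" "\<delta>' \<in> {0<..}" for \<delta> \<delta>' :: real
    using that by (intro bexI[of _ "min \<delta> \<delta>'"]) auto
  then have "eventually Q (fine_partitions a b) \<longleftrightarrow> (\<exists>\<delta>\<in>{0<..}. eventually Q (?F \<delta>))"
    unfolding fine_partitions_def by (intro eventually_INF_base) auto
  then show ?thesis by (auto simp: eventually_principal)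
qed

lemma fine_partitions_neq_bot: "a \<le> b \<Longrightarrow> fine_partitions a b \<noteq> bot"
  using exists_partition_mesh_less by (auto simp: eventually_False[symmetric] eventually_fine_partitions)

lemma eventually_is_partition: "eventually (is_partition a b) (fine_partitions a b)"
  by (auto simp: eventually_fine_partitions intro: exI[of _ 1])

lemma tendsto_mesh: "(mesh \<longlongrightarrow> 0) (fine_partitions a b)"
  by (auto simp: tendsto_iff eventually_fine_partitions mesh_nonneg)

lemma tendsto_mesh_powr: "0 < \<theta> \<Longrightarrow> ((\<lambda>P. mesh P powr \<theta>) \<longlongrightarrow> 0) (fine_partitions a b)"
  by (intro tendsto_zero_powrI tendsto_mesh) (auto simp: mesh_nonneg)

lemma tendsto_riemann_sum_telescope:
  "(riemann_sum (\<lambda>s t. f t - f s) \<longlongrightarrow> f b - f a) (fine_partitions a b)"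
  by (rule tendsto_eventually)
    (auto simp: eventually_fine_partitions riemann_sum_telescope is_partition_def intro: exI[of _ 1])

lemma tendsto_riemann_sum_zero:
  assumes "1 < \<theta>" "\<And>s t. a \<le> s \<Longrightarrow> s \<le> t \<Longrightarrow> t \<le> b \<Longrightarrow> \<bar>\<Xi> s t\<bar> \<le> c * (t - s) powr \<theta>"
  shows "(riemann_sum \<Xi> \<longlongrightarrow> 0) (fine_partitions a b)"
proof (rule Lim_null_comparison)
  have "((\<lambda>P. mesh P powr (\<theta> - 1)) \<longlongrightarrow> 0) (fine_partitions a b)"
    using assms(1) by (intro tendsto_mesh_powr) simp
  then show "((\<lambda>P. \<bar>c\<bar> * (b - a) * mesh P powr (\<theta> - 1)) \<longlongrightarrow> 0) (fine_partitions a b)"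
    using tendsto_mult_left[of _ 0 _ "\<bar>c\<bar> * (b - a)"] by simp
  have germ: "\<bar>\<Xi> s t\<bar> \<le> \<bar>c\<bar> * (t - s) powr \<theta>" if "a \<le> s" "s \<le> t" "t \<le> b" for s t
    using assms(2)[OF that] mult_right_mono[OF abs_ge_self powr_ge_zero, of c "t - s" \<theta>] by linarith
  have "norm (riemann_sum \<Xi> P) \<le> \<bar>c\<bar> * (b - a) * mesh P powr (\<theta> - 1)" if P: "is_partition a b P" for P
  proof -
    have "\<bar>riemann_sum \<Xi> P\<bar> \<le> riemann_sum (\<lambda>s t. \<bar>c\<bar> * (t - s) powr \<theta>) P"
      using germ by (rule riemann_sum_abs_le[OF P])
    also have "\<dots> \<le> \<bar>c\<bar> * (mesh P powr (\<theta> - 1) * (b - a))"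
      unfolding riemann_sum_cmult
      using riemann_sum_powr_le_mesh[OF P] assms(1) by (intro mult_left_mono) auto
    finally show ?thesis by (simp add: mult_ac)
  qed
  then show "eventually (\<lambda>P. norm (riemann_sum \<Xi> P) \<le> \<bar>c\<bar> * (b - a) * mesh P powr (\<theta> - 1))
      (fine_partitions a b)"
    by (rule eventually_mono[OF eventually_is_partition])
qed

lemma fine_partitions_Cauchy:
  fixes f :: "real list \<Rightarrow> real"
  assumes "a \<le> b"
    and "\<And>e. 0 < e \<Longrightarrow> \<exists>Q. eventually Q (fine_partitions a b) \<and> (\<forall>P P'. Q P \<and> Q P' \<longrightarrow> \<bar>f P - f P'\<bar> < e)"
  shows "\<exists>L. (f \<longlongrightarrow> L) (fine_partitions a b)"
proof -
  have "cauchy_filter (filtermap f (fine_partitions a b))"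
    using assms(2) by (simp add: cauchy_filter_metric_filtermap dist_real_def)
  then obtain L where "filtermap f (fine_partitions a b) \<le> nhds L"
    using complete_UNIV fine_partitions_neq_bot[OF assms(1)] complete_uniform[of UNIV]
    by (force simp: filtermap_bot_iff)
  then show ?thesis unfolding filterlim_def by blast
qed

lemma convergent_if_refinements_close:
  fixes f :: "real list \<Rightarrow> real"
  assumes "a \<le> b" and g: "(g \<longlongrightarrow> 0) (fine_partitions a b)"
    and close: "\<And>P R. is_partition a b P \<Longrightarrow> is_partition a b R \<Longrightarrow> set P \<subseteq> set R \<Longrightarrow> \<bar>f R - f P\<bar> \<le> g P"
  shows "\<exists>L. (f \<longlongrightarrow> L) (fine_partitions a b)"
proof (rule fine_partitions_Cauchy[OF assms(1)])
  fix e :: real assume "0 < e"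
  then have "eventually (\<lambda>P. g P < e / 2) (fine_partitions a b)"
    using order_tendstoD(2)[OF g, of "e / 2"] by simp
  then have "eventually (\<lambda>P. is_partition a b P \<and> g P < e / 2) (fine_partitions a b)"
    by (rule eventually_conj[OF eventually_is_partition])
  moreover have "\<bar>f P - f P'\<bar> < e"
    if "is_partition a b P \<and> g P < e / 2" "is_partition a b P' \<and> g P' < e / 2" for P P'
  proof -
    define R where "R = sorted_list_of_set (set P \<union> set P')"
    have "is_partition a b R" unfolding R_def using that is_partition_union by blast
    then have "\<bar>f R - f P\<bar> \<le> g P" "\<bar>f R - f P'\<bar> \<le> g P'"
      using that close unfolding R_def by auto
    then show ?thesis using that by linarith
  qed
  ultimately show "\<exists>Q. eventually Q (fine_partitions a b) \<and> (\<forall>P P'. Q P \<and> Q P' \<longrightarrow> \<bar>f P - f P'\<bar> < e)"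
    by blast
qed

text \<open>Riemann sums over a partition \<open>P\<close> and over any refinement of it differ by at most
  \<open>c \<cdot> sewing_constant \<theta> \<cdot> (b - a) \<cdot> mesh P^(\<theta> - 1)\<close>, so comparing two fine partitions with
  their common refinement shows that the Riemann sums are Cauchy along fine partitions.\<close>

theorem sewing_lemma:
  assumes \<Xi>: "sewing_condition a b c \<theta> \<Xi>" and c: "0 \<le> c" and \<theta>: "1 < \<theta>" and ab: "a \<le> b"
  shows "\<exists>L. (riemann_sum \<Xi> \<longlongrightarrow> L) (fine_partitions a b)
           \<and> \<bar>L - \<Xi> a b\<bar> \<le> c * sewing_constant \<theta> * (b - a) powr \<theta>"
proof -
  define K where "K = c * sewing_constant \<theta>"
  have "0 \<le> K" unfolding K_def using c sewing_constant_nonneg[OF \<theta>] by simp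
  define g where "g P = K * (mesh P powr (\<theta> - 1) * (b - a))" for P
  have "(g \<longlongrightarrow> K * (0 * (b - a))) (fine_partitions a b)"
    unfolding g_def using \<theta> by (intro tendsto_intros tendsto_mesh_powr) simp
  then have g: "(g \<longlongrightarrow> 0) (fine_partitions a b)" by simp
  have close: "\<bar>riemann_sum \<Xi> R - riemann_sum \<Xi> P\<bar> \<le> g P"
    if "is_partition a b P" "is_partition a b R" "set P \<subseteq> set R" for P R
  proof -
    have "\<bar>riemann_sum \<Xi> R - riemann_sum \<Xi> P\<bar> \<le> K * riemann_sum (\<lambda>s t. (t - s) powr \<theta>) P"
      using riemann_sum_refinement[OF \<Xi> c \<theta> that] unfolding K_def .
    also have "\<dots> \<le> g P"
      unfolding g_def using riemann_sum_powr_le_mesh[OF that(1)] \<theta> \<open>0 \<le> K\<close>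
      by (intro mult_left_mono) auto
    finally show ?thesis .
  qed
  obtain L where L: "(riemann_sum \<Xi> \<longlongrightarrow> L) (fine_partitions a b)"
    using convergent_if_refinements_close[OF ab g close] by blast
  moreover have "\<bar>L - \<Xi> a b\<bar> \<le> K * (b - a) powr \<theta>"
  proof (rule tendsto_upperbound)
    show "((\<lambda>P. \<bar>riemann_sum \<Xi> P - \<Xi> a b\<bar>) \<longlongrightarrow> \<bar>L - \<Xi> a b\<bar>) (fine_partitions a b)"
      by (intro tendsto_rabs tendsto_diff L tendsto_const)
    have "\<bar>riemann_sum \<Xi> P - \<Xi> a b\<bar> \<le> K * (b - a) powr \<theta>" if "is_partition a b P" for P
      using sewing_bound[OF \<Xi> c \<theta> that] unfolding K_def .
    then show "eventually (\<lambda>P. \<bar>riemann_sum \<Xi> P - \<Xi> a b\<bar> \<le> K * (b - a) powr \<theta>) (fine_partitions a b)"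
      by (rule eventually_mono[OF eventually_is_partition])
    show "fine_partitions a b \<noteq> bot" using fine_partitions_neq_bot[OF ab] .
  qed
  ultimately show ?thesis unfolding K_def by blast
qed

lemma riemann_sum_limit_concat:
  assumes "a \<le> b" "b \<le> c"
    and "(riemann_sum \<Xi> \<longlongrightarrow> L) (fine_partitions a c)"
    and "(riemann_sum \<Xi> \<longlongrightarrow> L1) (fine_partitions a b)"
    and "(riemann_sum \<Xi> \<longlongrightarrow> L2) (fine_partitions b c)"
  shows "L = L1 + L2"
proof -
  have close: "\<bar>L - (L1 + L2)\<bar> \<le> 3 * e" if "0 < e" for e
  proof -
    have ev: "\<exists>\<delta>>0. \<forall>P. is_partition x y P \<longrightarrow> mesh P < \<delta> \<longrightarrow> \<bar>riemann_sum \<Xi> P - M\<bar> < e"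
      if "(riemann_sum \<Xi> \<longlongrightarrow> M) (fine_partitions x y)" for x y M
      using tendstoD[OF that \<open>0 < e\<close>] unfolding eventually_fine_partitions dist_real_def .
    obtain \<delta> \<delta>1 \<delta>2 where \<delta>: "0 < \<delta>" "0 < \<delta>1" "0 < \<delta>2"
      "\<forall>P. is_partition a c P \<longrightarrow> mesh P < \<delta> \<longrightarrow> \<bar>riemann_sum \<Xi> P - L\<bar> < e"
      "\<forall>P. is_partition a b P \<longrightarrow> mesh P < \<delta>1 \<longrightarrow> \<bar>riemann_sum \<Xi> P - L1\<bar> < e"
      "\<forall>P. is_partition b c P \<longrightarrow> mesh P < \<delta>2 \<longrightarrow> \<bar>riemann_sum \<Xi> P - L2\<bar> < e"
      using ev[OF assms(3)] ev[OF assms(4)] ev[OF assms(5)] by blast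
    define m where "m = min \<delta> (min \<delta>1 \<delta>2)"
    have "0 < m" using \<delta> unfolding m_def by simp
    obtain P1 P2 where P: "is_partition a b P1" "mesh P1 < m" "is_partition b c P2" "mesh P2 < m"
      using exists_partition_mesh_less[OF assms(1) \<open>0 < m\<close>] exists_partition_mesh_less[OF assms(2) \<open>0 < m\<close>]
      by blast
    obtain T M where TM: "P1 = T @ [b]" "P2 = b # M" "is_partition a c (T @ b # M)"
      using is_partition_append[OF P(1,3)] by blast
    have "mesh (T @ b # M) = max (mesh P1) (mesh P2)" unfolding TM by (rule mesh_append)
    then have "mesh (T @ b # M) < \<delta>" using P(2,4) unfolding m_def by linarith
    then have "\<bar>riemann_sum \<Xi> (T @ b # M) - L\<bar> < e" using \<delta>(4) TM(3) by blast
    moreover have "riemann_sum \<Xi> (T @ b # M) = riemann_sum \<Xi> P1 + riemann_sum \<Xi> P2"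
      unfolding TM by (rule riemann_sum_append)
    moreover have "\<bar>riemann_sum \<Xi> P1 - L1\<bar> < e" "\<bar>riemann_sum \<Xi> P2 - L2\<bar> < e"
      using \<delta>(5,6) P unfolding m_def by auto
    ultimately show ?thesis by linarith
  qed
  have "\<bar>L - (L1 + L2)\<bar> \<le> 0 + e" if "0 < e" for e
    using close[of "e / 3"] that by simp
  then have "\<bar>L - (L1 + L2)\<bar> \<le> 0" by (rule field_le_epsilon)
  then show ?thesis by simp
qed
section \<open>The level-2 signature of a Hoelder path\<close>

definition holder_path :: "real \<Rightarrow> real \<Rightarrow> (real \<Rightarrow> 'v::real_normed_vector) \<Rightarrow> bool" where
  "holder_path H \<rho> x \<longleftrightarrow> (\<forall>s\<in>{0..1}. \<forall>s'\<in>{0..1}. norm (x s - x s') \<le> H * \<bar>s - s'\<bar> powr \<rho>)"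

definition signature_germ :: "(real \<Rightarrow> 'v::real_inner) \<Rightarrow> real \<Rightarrow> 'v \<Rightarrow> 'v \<Rightarrow> real \<Rightarrow> real \<Rightarrow> real" where
  "signature_germ x a u w s t = ((x s - x a) \<bullet> u) * ((x t - x s) \<bullet> w)"

lemma signature_germ_delta:
  "signature_germ x a u w s t - signature_germ x a u w s r - signature_germ x a u w r t
     = - (((x r - x s) \<bullet> u) * ((x t - x r) \<bullet> w))"
  unfolding signature_germ_def by (simp add: inner_diff_left algebra_simps)

lemma S2_eq_The:
  "S2 x a b u w = (THE L. (riemann_sum (signature_germ x a u w) \<longlongrightarrow> L) (fine_partitions a b))"
proof -
  have "rs_sum2 x P u w = riemann_sum (signature_germ x a u w) P" if "is_partition a b P" for P
    using is_partition_nth(1)[OF that] by (simp add: rs_sum2_def riemann_sum_conv_sum signature_germ_def)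
  then have "(\<forall>\<epsilon>>0. \<exists>\<delta>>0. \<forall>P. is_partition a b P \<and> mesh P < \<delta> \<longrightarrow> \<bar>rs_sum2 x P u w - L\<bar> < \<epsilon>)
      \<longleftrightarrow> (riemann_sum (signature_germ x a u w) \<longlongrightarrow> L) (fine_partitions a b)" for L
    by (simp add: tendsto_iff eventually_fine_partitions dist_real_def imp_conjL cong: conj_cong)
  then show ?thesis unfolding S2_def by simp
qed

lemma S2_eqI:
  "a \<le> b \<Longrightarrow> (riemann_sum (signature_germ x a u w) \<longlongrightarrow> L) (fine_partitions a b) \<Longrightarrow> S2 x a b u w = L"
  unfolding S2_eq_The by (blast intro: tendsto_unique[OF fine_partitions_neq_bot])

lemma abs_inner_le: "norm v \<le> A \<Longrightarrow> \<bar>v \<bullet> u\<bar> \<le> A * norm u"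
  by (meson Cauchy_Schwarz_ineq2 mult_right_mono norm_ge_zero order_trans)

locale young_path =
  fixes x :: "real \<Rightarrow> 'v::real_inner" and H \<rho> :: real
  assumes holder: "holder_path H \<rho> x" and H_nonneg: "0 \<le> H" and rho_gt: "1 / 2 < \<rho>"
begin

lemma increment_inner_le:
  assumes "0 \<le> s" "s \<le> p" "p \<le> q" "q \<le> t" "t \<le> 1"
  shows "\<bar>(x q - x p) \<bullet> u\<bar> \<le> H * (t - s) powr \<rho> * norm u"
proof (rule abs_inner_le)
  have "p \<in> {0..1}" "q \<in> {0..1}" using assms by auto
  then have "norm (x q - x p) \<le> H * \<bar>q - p\<bar> powr \<rho>"
    using holder unfolding holder_path_def by blast
  also have "\<dots> \<le> H * (t - s) powr \<rho>"
    using assms H_nonneg rho_gt by (intro mult_left_mono powr_mono2) auto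
  finally show "norm (x q - x p) \<le> H * (t - s) powr \<rho>" .
qed

lemma increment_product_le:
  assumes "0 \<le> s" "s \<le> p" "p \<le> q" "q \<le> t" "s \<le> p'" "p' \<le> q'" "q' \<le> t" "t \<le> 1"
  shows "\<bar>((x q - x p) \<bullet> u) * ((x q' - x p') \<bullet> w)\<bar> \<le> norm u * norm w * H\<^sup>2 * (t - s) powr (2 * \<rho>)"
proof -
  have "\<bar>((x q - x p) \<bullet> u) * ((x q' - x p') \<bullet> w)\<bar>
      \<le> (H * (t - s) powr \<rho> * norm u) * (H * (t - s) powr \<rho> * norm w)"
    unfolding abs_mult using assms by (intro mult_mono increment_inner_le) (auto simp: H_nonneg)
  also have "\<dots> = norm u * norm w * H\<^sup>2 * (t - s) powr (2 * \<rho>)"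
    by (simp add: power2_eq_square powr_add[symmetric] algebra_simps)
  finally show ?thesis .
qed

lemma germ_sewing_condition:
  assumes "0 \<le> a" "b \<le> 1"
  shows "sewing_condition a b (norm u * norm w * H\<^sup>2) (2 * \<rho>) (signature_germ x a u w)"
  unfolding sewing_condition_def signature_germ_delta abs_minus_cancel
  using assms by (auto intro!: increment_product_le)

lemma S2_tendsto_and_bound:
  assumes "0 \<le> a" "a \<le> b" "b \<le> 1"
  shows "(riemann_sum (signature_germ x a u w) \<longlongrightarrow> S2 x a b u w) (fine_partitions a b)"
    and "\<bar>S2 x a b u w\<bar> \<le> norm u * norm w * H\<^sup>2 * sewing_constant (2 * \<rho>) * (b - a) powr (2 * \<rho>)"
proof -
  obtain L where L: "(riemann_sum (signature_germ x a u w) \<longlongrightarrow> L) (fine_partitions a b)"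
    "\<bar>L - signature_germ x a u w a b\<bar> \<le> norm u * norm w * H\<^sup>2 * sewing_constant (2 * \<rho>) * (b - a) powr (2 * \<rho>)"
    using sewing_lemma[OF germ_sewing_condition] assms rho_gt by force
  moreover have "S2 x a b u w = L" using S2_eqI[OF assms(2) L(1)] .
  ultimately show "(riemann_sum (signature_germ x a u w) \<longlongrightarrow> S2 x a b u w) (fine_partitions a b)"
    and "\<bar>S2 x a b u w\<bar> \<le> norm u * norm w * H\<^sup>2 * sewing_constant (2 * \<rho>) * (b - a) powr (2 * \<rho>)"
    by (simp_all add: signature_germ_def)
qed

lemmas S2_tendsto = S2_tendsto_and_bound(1) and S2_abs_le = S2_tendsto_and_bound(2)

lemma S2_linear_left:
  assumes "0 \<le> a" "a \<le> b" "b \<le> 1"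
  shows "S2 x a b (\<alpha> *\<^sub>R u1 + \<beta> *\<^sub>R u2) w = \<alpha> * S2 x a b u1 w + \<beta> * S2 x a b u2 w"
proof (rule S2_eqI[OF assms(2)])
  have "signature_germ x a (\<alpha> *\<^sub>R u1 + \<beta> *\<^sub>R u2) w
      = (\<lambda>s t. \<alpha> * signature_germ x a u1 w s t + \<beta> * signature_germ x a u2 w s t)"
    by (intro ext) (simp add: signature_germ_def inner_add_right algebra_simps)
  moreover have "((\<lambda>P. \<alpha> * riemann_sum (signature_germ x a u1 w) P + \<beta> * riemann_sum (signature_germ x a u2 w) P)
      \<longlongrightarrow> \<alpha> * S2 x a b u1 w + \<beta> * S2 x a b u2 w) (fine_partitions a b)"
    using assms by (intro tendsto_add tendsto_mult_left S2_tendsto)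
  ultimately show "(riemann_sum (signature_germ x a (\<alpha> *\<^sub>R u1 + \<beta> *\<^sub>R u2) w)
      \<longlongrightarrow> \<alpha> * S2 x a b u1 w + \<beta> * S2 x a b u2 w) (fine_partitions a b)"
    by (simp add: riemann_sum_add[abs_def] riemann_sum_cmult[abs_def])
qed

lemma S2_linear_right:
  assumes "0 \<le> a" "a \<le> b" "b \<le> 1"
  shows "S2 x a b u (\<alpha> *\<^sub>R w1 + \<beta> *\<^sub>R w2) = \<alpha> * S2 x a b u w1 + \<beta> * S2 x a b u w2"
proof (rule S2_eqI[OF assms(2)])
  have "signature_germ x a u (\<alpha> *\<^sub>R w1 + \<beta> *\<^sub>R w2)
      = (\<lambda>s t. \<alpha> * signature_germ x a u w1 s t + \<beta> * signature_germ x a u w2 s t)"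
    by (intro ext) (simp add: signature_germ_def inner_add_right algebra_simps)
  moreover have "((\<lambda>P. \<alpha> * riemann_sum (signature_germ x a u w1) P + \<beta> * riemann_sum (signature_germ x a u w2) P)
      \<longlongrightarrow> \<alpha> * S2 x a b u w1 + \<beta> * S2 x a b u w2) (fine_partitions a b)"
    using assms by (intro tendsto_add tendsto_mult_left S2_tendsto)
  ultimately show "(riemann_sum (signature_germ x a u (\<alpha> *\<^sub>R w1 + \<beta> *\<^sub>R w2))
      \<longlongrightarrow> \<alpha> * S2 x a b u w1 + \<beta> * S2 x a b u w2) (fine_partitions a b)"
    by (simp add: riemann_sum_add[abs_def] riemann_sum_cmult[abs_def])
qed

lemma S2_bilinear:
  assumes "0 \<le> a" "a \<le> b" "b \<le> 1"
  shows "bilinear (S2 x a b)"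
  unfolding bilinear_def
proof (intro conjI allI linearI)
  fix u w u1 u2 w1 w2 :: 'v and k :: real
  show "S2 x a b u (w1 + w2) = S2 x a b u w1 + S2 x a b u w2"
    using S2_linear_right[OF assms, of u 1 w1 1 w2] by simp
  show "S2 x a b u (k *\<^sub>R w) = k *\<^sub>R S2 x a b u w"
    using S2_linear_right[OF assms, of u k w 0 0] by simp
  show "S2 x a b (u1 + u2) w = S2 x a b u1 w + S2 x a b u2 w"
    using S2_linear_left[OF assms, of 1 u1 1 u2 w] by simp
  show "S2 x a b (k *\<^sub>R u) w = k *\<^sub>R S2 x a b u w"
    using S2_linear_left[OF assms, of k u 0 0 w] by simp
qed

text \<open>Integration by parts: the symmetric part of \<open>S2\<close> is the square of the increment, because the
  quadratic variation \<open>\<Sum> |x t - x s|\<^sup>2\<close> vanishes for \<open>\<rho> > 1/2\<close>.\<close>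

lemma S2_symmetric_part:
  assumes "0 \<le> a" "a \<le> b" "b \<le> 1"
  shows "S2 x a b u w + S2 x a b w u = ((x b - x a) \<bullet> u) * ((x b - x a) \<bullet> w)"
proof -
  define \<phi> where "\<phi> r = ((x r - x a) \<bullet> u) * ((x r - x a) \<bullet> w)" for r
  define \<Delta> where "\<Delta> s t = ((x t - x s) \<bullet> u) * ((x t - x s) \<bullet> w)" for s t
  have "\<bar>\<Delta> s t\<bar> \<le> norm u * norm w * H\<^sup>2 * (t - s) powr (2 * \<rho>)" if "a \<le> s" "s \<le> t" "t \<le> b" for s t
    unfolding \<Delta>_def using assms that by (intro increment_product_le) auto
  then have \<Delta>: "(riemann_sum \<Delta> \<longlongrightarrow> 0) (fine_partitions a b)"
    by (rule tendsto_riemann_sum_zero[rotated]) (use rho_gt in auto)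
  have "(riemann_sum (\<lambda>s t. (\<phi> t - \<phi> s) - \<Delta> s t) \<longlongrightarrow> (\<phi> b - \<phi> a) - 0) (fine_partitions a b)"
    unfolding riemann_sum_diff[of "\<lambda>s t. \<phi> t - \<phi> s" \<Delta>, abs_def]
    by (intro tendsto_diff tendsto_riemann_sum_telescope \<Delta>)
  moreover have "(\<lambda>s t. (\<phi> t - \<phi> s) - \<Delta> s t) = (\<lambda>s t. signature_germ x a u w s t + signature_germ x a w u s t)"
    unfolding \<phi>_def \<Delta>_def signature_germ_def by (auto simp: inner_diff_left algebra_simps)
  moreover have "(riemann_sum (\<lambda>s t. signature_germ x a u w s t + signature_germ x a w u s t)
      \<longlongrightarrow> S2 x a b u w + S2 x a b w u) (fine_partitions a b)"
    unfolding riemann_sum_add[abs_def] using assms by (intro tendsto_add S2_tendsto)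
  ultimately have "S2 x a b u w + S2 x a b w u = \<phi> b - \<phi> a"
    using tendsto_unique[OF fine_partitions_neq_bot[OF assms(2)]] by force
  then show ?thesis unfolding \<phi>_def by simp
qed

lemma S2_chen:
  assumes "0 \<le> a" "a \<le> b" "b \<le> c" "c \<le> 1"
  shows "S2 x a c u w = S2 x a b u w + S2 x b c u w + ((x b - x a) \<bullet> u) * ((x c - x b) \<bullet> w)"
proof -
  define \<psi> where "\<psi> r = ((x b - x a) \<bullet> u) * (x r \<bullet> w)" for r
  have "signature_germ x a u w = (\<lambda>s t. signature_germ x b u w s t + (\<psi> t - \<psi> s))"
    unfolding \<psi>_def signature_germ_def by (auto simp: inner_diff_left algebra_simps)
  moreover have "(riemann_sum (\<lambda>s t. signature_germ x b u w s t + (\<psi> t - \<psi> s))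
      \<longlongrightarrow> S2 x b c u w + (\<psi> c - \<psi> b)) (fine_partitions b c)"
    unfolding riemann_sum_add[abs_def] using assms by (intro tendsto_add tendsto_riemann_sum_telescope S2_tendsto) auto
  ultimately have "(riemann_sum (signature_germ x a u w) \<longlongrightarrow> S2 x b c u w + (\<psi> c - \<psi> b)) (fine_partitions b c)"
    by simp
  moreover have "(riemann_sum (signature_germ x a u w) \<longlongrightarrow> S2 x a c u w) (fine_partitions a c)"
    and "(riemann_sum (signature_germ x a u w) \<longlongrightarrow> S2 x a b u w) (fine_partitions a b)"
    using assms by (auto intro!: S2_tendsto)
  ultimately have "S2 x a c u w = S2 x a b u w + (S2 x b c u w + (\<psi> c - \<psi> b))"
    using riemann_sum_limit_concat[OF assms(2,3)] by blast
  then show ?thesis unfolding \<psi>_def by (simp add: inner_diff_left algebra_simps)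
qed

end

lemma germ_diff_sewing_condition:
  assumes x: "young_path x H \<rho>" and y: "young_path y H \<rho>" and D: "0 \<le> D" "0 \<le> \<gamma>"
    and xy: "\<And>p q. 0 \<le> p \<Longrightarrow> p \<le> q \<Longrightarrow> q \<le> 1 \<Longrightarrow> norm ((x q - x p) - (y q - y p)) \<le> D * (q - p) powr \<gamma>"
    and ab: "0 \<le> a" "b \<le> 1"
  shows "sewing_condition a b (2 * D * H * norm u * norm w) (\<rho> + \<gamma>)
           (\<lambda>s t. signature_germ x a u w s t - signature_germ y a u w s t)"
  unfolding sewing_condition_def
proof (intro allI impI)
  interpret x: young_path x H \<rho> by (rule x)
  interpret y: young_path y H \<rho> by (rule y)
  have diff_le: "\<bar>((x q - x p) - (y q - y p)) \<bullet> v\<bar> \<le> D * (t - s) powr \<gamma> * norm v"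
    if "a \<le> s" "s \<le> p" "p \<le> q" "q \<le> t" "t \<le> b" for s p q t v
  proof (rule abs_inner_le)
    have "norm ((x q - x p) - (y q - y p)) \<le> D * (q - p) powr \<gamma>" using xy that ab by auto
    also have "\<dots> \<le> D * (t - s) powr \<gamma>" using that D by (intro mult_left_mono powr_mono2) auto
    finally show "norm ((x q - x p) - (y q - y p)) \<le> D * (t - s) powr \<gamma>" .
  qed
  fix s r t assume srt: "a \<le> s" "s \<le> r" "r \<le> t" "t \<le> b"
  have "\<bar>((x r - x s - (y r - y s)) \<bullet> u) * ((x t - x r) \<bullet> w)\<bar>
      \<le> (D * (t - s) powr \<gamma> * norm u) * (H * (t - s) powr \<rho> * norm w)"
    unfolding abs_mult using srt ab D
    by (intro mult_mono diff_le x.increment_inner_le) (auto simp: x.H_nonneg)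
  moreover have "\<bar>((y r - y s) \<bullet> u) * ((x t - x r - (y t - y r)) \<bullet> w)\<bar>
      \<le> (H * (t - s) powr \<rho> * norm u) * (D * (t - s) powr \<gamma> * norm w)"
    unfolding abs_mult using srt ab D
    by (intro mult_mono diff_le y.increment_inner_le) (auto simp: x.H_nonneg)
  moreover have "(t - s) powr \<rho> * (t - s) powr \<gamma> = (t - s) powr (\<rho> + \<gamma>)"
    by (simp add: powr_add)
  moreover have "signature_germ x a u w s t - signature_germ y a u w s t
      - (signature_germ x a u w s r - signature_germ y a u w s r)
      - (signature_germ x a u w r t - signature_germ y a u w r t)
      = - (((x r - x s - (y r - y s)) \<bullet> u) * ((x t - x r) \<bullet> w)
           + ((y r - y s) \<bullet> u) * ((x t - x r - (y t - y r)) \<bullet> w))"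
    using signature_germ_delta[of x a u w s t r] signature_germ_delta[of y a u w s t r]
    by (simp add: inner_diff_left algebra_simps)
  ultimately show "\<bar>signature_germ x a u w s t - signature_germ y a u w s t
      - (signature_germ x a u w s r - signature_germ y a u w s r)
      - (signature_germ x a u w r t - signature_germ y a u w r t)\<bar>
      \<le> 2 * D * H * norm u * norm w * (t - s) powr (\<rho> + \<gamma>)"
    by (simp add: algebra_simps)
qed

lemma S2_diff_abs_le:
  assumes x: "young_path x H \<rho>" and y: "young_path y H \<rho>"
    and D: "0 \<le> D" "0 \<le> \<gamma>" "1 < \<rho> + \<gamma>"
    and xy: "\<And>p q. 0 \<le> p \<Longrightarrow> p \<le> q \<Longrightarrow> q \<le> 1 \<Longrightarrow> norm ((x q - x p) - (y q - y p)) \<le> D * (q - p) powr \<gamma>"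
    and ab: "0 \<le> a" "a \<le> b" "b \<le> 1"
  shows "\<bar>S2 x a b u w - S2 y a b u w\<bar>
           \<le> 2 * D * H * norm u * norm w * sewing_constant (\<rho> + \<gamma>) * (b - a) powr (\<rho> + \<gamma>)"
proof -
  interpret x: young_path x H \<rho> by (rule x)
  interpret y: young_path y H \<rho> by (rule y)
  define \<Xi> where "\<Xi> s t = signature_germ x a u w s t - signature_germ y a u w s t" for s t
  have "0 \<le> 2 * D * H * norm u * norm w" using D x.H_nonneg by simp
  then obtain L where L: "(riemann_sum \<Xi> \<longlongrightarrow> L) (fine_partitions a b)"
      "\<bar>L - \<Xi> a b\<bar> \<le> 2 * D * H * norm u * norm w * sewing_constant (\<rho> + \<gamma>) * (b - a) powr (\<rho> + \<gamma>)"
    using sewing_lemma[OF germ_diff_sewing_condition[OF x y D(1,2) xy ab(1,3)]] D ab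
    unfolding \<Xi>_def by blast
  have "(riemann_sum \<Xi> \<longlongrightarrow> S2 x a b u w - S2 y a b u w) (fine_partitions a b)"
    unfolding \<Xi>_def riemann_sum_diff[abs_def] using ab by (intro tendsto_diff x.S2_tendsto y.S2_tendsto)
  then have "L = S2 x a b u w - S2 y a b u w"
    using tendsto_unique[OF fine_partitions_neq_bot[OF ab(2)] L(1)] by blast
  moreover have "\<Xi> a b = 0" unfolding \<Xi>_def signature_germ_def by simp
  ultimately show ?thesis using L(2) by simp
qed

section \<open>The double group functional of a Hoelder surface\<close>

lemma tmul_unipotent: "tmul (1, a, A) (1, b, B) = (1, a + b, \<lambda>u w. A u w + tprod_vec a b u w + B u w)"
  unfolding tmul_def by (simp add: ac_simps)

lemma tinv_unipotent: "tinv (1, a, A) = (1, - a, \<lambda>u w. tprod_vec a a u w - A u w)"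
  unfolding tinv_def by simp

text \<open>After truncation at level two, conjugating a pure level-two element only sees the level-zero
  part of \<open>g\<close>; hence \<open>G\<^sub>0\<close> acts trivially on \<open>G\<^sub>1\<close>.\<close>

lemma act_unipotent: "act (1, a, A) E = E"
  unfolding act_def tmul_def tinv_def tprod_vec_def by simp

lemma xv_of_eq_xh_of_transpose: "xv_of X s t1 t2 = xh_of (\<lambda>p. X (snd p, fst p)) t1 t2 s"
  by (simp add: xv_of_def xh_of_def)

lemma boundary_product_eq:
  "tmul (tmul (tmul (xh_of X s1 s2 t1) (xv_of X s2 t1 t2)) (tinv (xh_of X s1 s2 t2))) (tinv (xv_of X s1 t1 t2))
     = (1, 0, XX_of X s1 s2 t1 t2)"
  unfolding XX_of_def xh_of_def xv_of_def tmul_unipotent tinv_unipotent by simp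

text \<open>With \<open>a\<close>, \<open>b\<close>, \<open>c\<close> the increments of \<open>X\<close> along the bottom, right and top sides of the rectangle;
  the contributions of the left side cancel because \<open>a + b - c\<close> is its increment.\<close>

definition boundary_cross_term ::
  "(real \<times> real \<Rightarrow> 'v::real_inner) \<Rightarrow> real \<Rightarrow> real \<Rightarrow> real \<Rightarrow> real \<Rightarrow> 'v \<Rightarrow> 'v \<Rightarrow> real" where
  "boundary_cross_term X s1 s2 t1 t2 u w =
     (let a = X (s2, t1) - X (s1, t1); b = X (s2, t2) - X (s2, t1); c = X (s2, t2) - X (s1, t2)
      in (a \<bullet> u) * (b \<bullet> w) - ((a - c) \<bullet> u) * (c \<bullet> w) - (b \<bullet> u) * (c \<bullet> w))"

lemma XX_of_eq:
  "XX_of X s1 s2 t1 t2 u w = S2 (\<lambda>s. X (s, t1)) s1 s2 u w - S2 (\<lambda>s. X (s, t2)) s1 s2 u w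
     - (S2 (\<lambda>t. X (s1, t)) t1 t2 u w - S2 (\<lambda>t. X (s2, t)) t1 t2 u w) + boundary_cross_term X s1 s2 t1 t2 u w"
  unfolding XX_of_def xh_of_def xv_of_def tmul_unipotent tinv_unipotent boundary_cross_term_def Let_def
  by (simp add: tprod_vec_def inner_diff_left inner_add_left algebra_simps)

lemma bilinear_iff_additive_homogeneous:
  "bilinear E \<longleftrightarrow> (\<forall>u1 u2 w. E (u1 + u2) w = E u1 w + E u2 w) \<and> (\<forall>k u w. E (k *\<^sub>R u) w = k * E u w)
     \<and> (\<forall>u w1 w2. E u (w1 + w2) = E u w1 + E u w2) \<and> (\<forall>k u w. E u (k *\<^sub>R w) = k * E u w)"
  unfolding bilinear_def linear_iff by auto

locale holder_surface =
  fixes X :: "real \<times> real \<Rightarrow> 'v::euclidean_space" and H \<rho> :: real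
  assumes holder: "\<And>p q. p \<in> {0..1} \<times> {0..1} \<Longrightarrow> q \<in> {0..1} \<times> {0..1} \<Longrightarrow>
      norm (X p - X q) \<le> H * dist p q powr \<rho>"
    and H_nonneg: "0 \<le> H" and rho_gt: "2 / 3 < \<rho>"
begin

lemma row_young_path: "0 \<le> t \<Longrightarrow> t \<le> 1 \<Longrightarrow> young_path (\<lambda>s. X (s, t)) H \<rho>"
  unfolding young_path_def holder_path_def using holder[of "(_, t)" "(_, t)"] H_nonneg rho_gt
  by (auto simp: dist_Pair_Pair dist_real_def)

lemma column_young_path: "0 \<le> s \<Longrightarrow> s \<le> 1 \<Longrightarrow> young_path (\<lambda>t. X (s, t)) H \<rho>"
  unfolding young_path_def holder_path_def using holder[of "(s, _)" "(s, _)"] H_nonneg rho_gt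
  by (auto simp: dist_Pair_Pair dist_real_def)

lemma holder_surface_transpose: "holder_surface (\<lambda>p. X (snd p, fst p)) H \<rho>"
proof
  fix p q :: "real \<times> real" assume "p \<in> {0..1} \<times> {0..1}" "q \<in> {0..1} \<times> {0..1}"
  moreover have "dist (snd p, fst p) (snd q, fst q) = dist p q"
    by (cases p; cases q) (simp add: dist_Pair_Pair add.commute)
  ultimately show "norm (X (snd p, fst p) - X (snd q, fst q)) \<le> H * dist p q powr \<rho>"
    using holder[of "(snd p, fst p)" "(snd q, fst q)"] by (auto simp: mem_Times_iff)
qed (use H_nonneg rho_gt in auto)

lemma xh_of_in_G0:
  assumes "0 \<le> s1" "s1 \<le> s2" "s2 \<le> 1" "0 \<le> t" "t \<le> 1"
  shows "xh_of X s1 s2 t \<in> G0"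
proof -
  interpret row: young_path "\<lambda>s. X (s, t)" H \<rho> using row_young_path assms by auto
  define v where "v = X (s2, t) - X (s1, t)"
  define S where "S = S2 (\<lambda>s. X (s, t)) s1 s2"
  define B where "B = (\<lambda>u w. S u w - tprod_vec v v u w / 2)"
  have "bilinear S" unfolding S_def using row.S2_bilinear assms by auto
  then have "bilinear B"
    unfolding B_def bilinear_iff_additive_homogeneous
    by (simp add: tprod_vec_def inner_add_right algebra_simps)
  moreover have "B u w = - B w u" for u w
  proof -
    have "S u w + S w u = (v \<bullet> u) * (v \<bullet> w)"
      unfolding S_def v_def by (rule row.S2_symmetric_part[OF assms(1-3)])
    moreover have "(v \<bullet> w) * (v \<bullet> u) = (v \<bullet> u) * (v \<bullet> w)" by simp
    ultimately show ?thesis unfolding B_def tprod_vec_def by linarith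
  qed
  ultimately have "B \<in> lie2" unfolding lie2_def by blast
  moreover have "xh_of X s1 s2 t = texp v B"
    unfolding xh_of_def texp_def B_def S_def v_def by auto
  ultimately show ?thesis unfolding G0_def by blast
qed

lemma xh_of_chen:
  assumes "0 \<le> s1" "s1 \<le> s2" "s2 \<le> s3" "s3 \<le> 1" "0 \<le> t" "t \<le> 1"
  shows "tmul (xh_of X s1 s2 t) (xh_of X s2 s3 t) = xh_of X s1 s3 t"
proof -
  interpret row: young_path "\<lambda>s. X (s, t)" H \<rho> using row_young_path assms by auto
  show ?thesis
    unfolding xh_of_def tmul_unipotent
    by (simp add: fun_eq_iff row.S2_chen[OF assms(1-4)] tprod_vec_def)
qed

lemma XX_of_in_lam2:
  assumes "0 \<le> s1" "s1 \<le> s2" "s2 \<le> 1" "0 \<le> t1" "t1 \<le> t2" "t2 \<le> 1"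
  shows "XX_of X s1 s2 t1 t2 \<in> lam2"
proof -
  interpret r1: young_path "\<lambda>s. X (s, t1)" H \<rho> using row_young_path assms by auto
  interpret r2: young_path "\<lambda>s. X (s, t2)" H \<rho> using row_young_path assms by auto
  interpret c1: young_path "\<lambda>t. X (s1, t)" H \<rho> using column_young_path assms by auto
  interpret c2: young_path "\<lambda>t. X (s2, t)" H \<rho> using column_young_path assms by auto
  have "bilinear (S2 (\<lambda>s. X (s, t1)) s1 s2)" "bilinear (S2 (\<lambda>s. X (s, t2)) s1 s2)"
    "bilinear (S2 (\<lambda>t. X (s1, t)) t1 t2)" "bilinear (S2 (\<lambda>t. X (s2, t)) t1 t2)"
    using assms by (auto intro!: r1.S2_bilinear r2.S2_bilinear c1.S2_bilinear c2.S2_bilinear)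
  then have "bilinear (XX_of X s1 s2 t1 t2)"
    unfolding bilinear_iff_additive_homogeneous XX_of_eq boundary_cross_term_def Let_def
    by (simp add: inner_add_right algebra_simps)
  moreover have "XX_of X s1 s2 t1 t2 u w = - XX_of X s1 s2 t1 t2 w u" for u w
    using r1.S2_symmetric_part[of s1 s2 u w] r2.S2_symmetric_part[of s1 s2 u w]
      c1.S2_symmetric_part[of t1 t2 u w] c2.S2_symmetric_part[of t1 t2 u w] assms
    unfolding XX_of_eq boundary_cross_term_def Let_def
    by (simp add: inner_diff_left algebra_simps)
  ultimately show ?thesis unfolding lam2_def by blast
qed

lemma XX_of_horizontal_chen:
  assumes "0 \<le> s1" "s1 \<le> s2" "s2 \<le> s3" "s3 \<le> 1" "0 \<le> t1" "t1 \<le> t2" "t2 \<le> 1"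
  shows "XX_of X s1 s3 t1 t2 = g1mul (act (xh_of X s1 s2 t1) (XX_of X s2 s3 t1 t2)) (XX_of X s1 s2 t1 t2)"
proof -
  interpret r1: young_path "\<lambda>s. X (s, t1)" H \<rho> using row_young_path assms by auto
  interpret r2: young_path "\<lambda>s. X (s, t2)" H \<rho> using row_young_path assms by auto
  show ?thesis
    unfolding xh_of_def act_unipotent g1mul_def
    by (intro ext) (simp add: XX_of_eq r1.S2_chen[OF assms(1-4)] r2.S2_chen[OF assms(1-4)]
        boundary_cross_term_def Let_def inner_diff_left algebra_simps)
qed

lemma XX_of_vertical_chen:
  assumes "0 \<le> s1" "s1 \<le> s2" "s2 \<le> 1" "0 \<le> t1" "t1 \<le> t2" "t2 \<le> t3" "t3 \<le> 1"
  shows "XX_of X s1 s2 t1 t3 = g1mul (XX_of X s1 s2 t1 t2) (act (xv_of X s1 t1 t2) (XX_of X s1 s2 t2 t3))"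
proof -
  interpret c1: young_path "\<lambda>t. X (s1, t)" H \<rho> using column_young_path assms by auto
  interpret c2: young_path "\<lambda>t. X (s2, t)" H \<rho> using column_young_path assms by auto
  show ?thesis
    unfolding xv_of_def act_unipotent g1mul_def
    by (intro ext) (simp add: XX_of_eq c1.S2_chen[OF assms(4-7)] c2.S2_chen[OF assms(4-7)]
        boundary_cross_term_def Let_def inner_diff_left algebra_simps)
qed


lemma xv_of_in_G0: "0 \<le> s \<Longrightarrow> s \<le> 1 \<Longrightarrow> 0 \<le> t1 \<Longrightarrow> t1 \<le> t2 \<Longrightarrow> t2 \<le> 1 \<Longrightarrow> xv_of X s t1 t2 \<in> G0"
  unfolding xv_of_eq_xh_of_transpose by (rule holder_surface.xh_of_in_G0[OF holder_surface_transpose])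

lemma xv_of_chen:
  "0 \<le> s \<Longrightarrow> s \<le> 1 \<Longrightarrow> 0 \<le> t1 \<Longrightarrow> t1 \<le> t2 \<Longrightarrow> t2 \<le> t3 \<Longrightarrow> t3 \<le> 1 \<Longrightarrow>
     tmul (xv_of X s t1 t2) (xv_of X s t2 t3) = xv_of X s t1 t3"
  unfolding xv_of_eq_xh_of_transpose by (rule holder_surface.xh_of_chen[OF holder_surface_transpose])

lemma double_group_functional: "double_group_functional (xh_of X) (xv_of X) (XX_of X)"
  unfolding double_group_functional_def
proof (intro conjI allI impI; elim conjE)
  show "xh_of X s1 s2 t \<in> G0" if "0 \<le> s1" "s1 \<le> s2" "s2 \<le> 1" "0 \<le> t" "t \<le> 1" for s1 s2 t
    using that by (rule xh_of_in_G0)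
  show "xv_of X s t1 t2 \<in> G0" if "0 \<le> s" "s \<le> 1" "0 \<le> t1" "t1 \<le> t2" "t2 \<le> 1" for s t1 t2
    using that by (rule xv_of_in_G0)
  show "XX_of X s1 s2 t1 t2 \<in> lam2" if "0 \<le> s1" "s1 \<le> s2" "s2 \<le> 1" "0 \<le> t1" "t1 \<le> t2" "t2 \<le> 1"
    for s1 s2 t1 t2
    using that by (rule XX_of_in_lam2)
  show "tmul (xh_of X s1 s2 t) (xh_of X s2 s3 t) = xh_of X s1 s3 t"
    if "0 \<le> s1" "s1 \<le> s2" "s2 \<le> s3" "s3 \<le> 1" "0 \<le> t" "t \<le> 1" for s1 s2 s3 t
    using that by (rule xh_of_chen)
  show "tmul (xv_of X s t1 t2) (xv_of X s t2 t3) = xv_of X s t1 t3"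
    if "0 \<le> s" "s \<le> 1" "0 \<le> t1" "t1 \<le> t2" "t2 \<le> t3" "t3 \<le> 1" for s t1 t2 t3
    using that by (rule xv_of_chen)
qed (simp add: boundary_product_eq)

lemma multiplicative_dgf: "multiplicative_dgf (xh_of X) (xv_of X) (XX_of X)"
  unfolding multiplicative_dgf_def
proof (intro conjI allI impI; elim conjE)
  show "XX_of X s1 s3 t1 t2 = g1mul (act (xh_of X s1 s2 t1) (XX_of X s2 s3 t1 t2)) (XX_of X s1 s2 t1 t2)"
    if "0 \<le> s1" "s1 \<le> s2" "s2 \<le> s3" "s3 \<le> 1" "0 \<le> t1" "t1 \<le> t2" "t2 \<le> 1" for s1 s2 s3 t1 t2
    using that by (rule XX_of_horizontal_chen)
  show "XX_of X s1 s2 t1 t3 = g1mul (XX_of X s1 s2 t1 t2) (act (xv_of X s1 t1 t2) (XX_of X s1 s2 t2 t3))"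
    if "0 \<le> s1" "s1 \<le> s2" "s2 \<le> 1" "0 \<le> t1" "t1 \<le> t2" "t2 \<le> t3" "t3 \<le> 1" for s1 s2 t1 t2 t3
    using that by (rule XX_of_vertical_chen)
qed

end

section \<open>Hoelder estimates\<close>

lemma powr_mult_nat: "1 \<le> n \<Longrightarrow> x powr (real n * a) = (x powr a) ^ n" for x :: real
  by (cases "x = 0") (auto simp: powr_power)

lemma sum_powr_degree_four:
  fixes x y a :: real
  shows "(\<Sum>q = 1..2 * 2 - 1. x powr (real q * a) * y powr (real (2 * 2 - q) * a))
    = x powr a * (y powr a) ^ 3 + (x powr a)\<^sup>2 * (y powr a)\<^sup>2 + (x powr a) ^ 3 * y powr a"
proof -
  have indices: "{1..2 * 2 - 1} = {1, 2, 3::nat}" by auto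
  have "(\<Sum>q = 1..2 * 2 - 1. x powr (real q * a) * y powr (real (2 * 2 - q) * a))
      = (\<Sum>q = 1..2 * 2 - 1. (x powr a) ^ q * (y powr a) ^ (2 * 2 - q))"
  proof (rule sum.cong[OF refl])
    fix q :: nat assume "q \<in> {1..2 * 2 - 1}"
    then have "1 \<le> q" "1 \<le> 2 * 2 - q" by auto
    then show "x powr (real q * a) * y powr (real (2 * 2 - q) * a) = (x powr a) ^ q * (y powr a) ^ (2 * 2 - q)"
      by (simp only: powr_mult_nat)
  qed
  also have "\<dots> = x powr a * (y powr a) ^ 3 + (x powr a)\<^sup>2 * (y powr a)\<^sup>2 + (x powr a) ^ 3 * y powr a"
    unfolding indices by (simp add: power2_eq_square)
  finally show ?thesis .
qed

lemma le_mult_if_le_squares: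
  fixes x K A B :: real
  assumes "x \<le> K * A\<^sup>2" "x \<le> K * B\<^sup>2" "0 \<le> A" "0 \<le> B" "0 \<le> K"
  shows "x \<le> K * A * B"
proof (cases "A \<le> B")
  case True
  then have "K * A\<^sup>2 \<le> K * (A * B)" using assms by (intro mult_left_mono) (auto simp: power2_eq_square mult_left_mono)
  then show ?thesis using assms(1) by (simp add: mult.assoc)
next
  case False
  then have "K * B\<^sup>2 \<le> K * (A * B)" using assms by (intro mult_left_mono) (auto simp: power2_eq_square mult_right_mono)
  then show ?thesis using assms(2) by (simp add: mult.assoc)
qed

lemma t2norm_le:
  fixes A :: "'v::euclidean_space tens2"
  assumes "\<And>i j. i \<in> Basis \<Longrightarrow> j \<in> Basis \<Longrightarrow> \<bar>A i j\<bar> \<le> M"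
  shows "t2norm A \<le> real DIM('v) * M"
proof -
  obtain i0 :: 'v where "i0 \<in> Basis" using nonempty_Basis by blast
  then have "0 \<le> M" using assms[of i0 i0] by auto
  have "(\<Sum>i\<in>Basis. \<Sum>j\<in>Basis. (A i j)\<^sup>2) \<le> (\<Sum>i\<in>(Basis::'v set). \<Sum>j\<in>(Basis::'v set). M\<^sup>2)"
    using assms by (intro sum_mono) (metis abs_ge_zero power2_abs power_mono)
  also have "\<dots> = (real DIM('v) * M)\<^sup>2" by (simp add: power2_eq_square)
  finally have "sqrt (\<Sum>i\<in>Basis. \<Sum>j\<in>Basis. (A i j)\<^sup>2) \<le> sqrt ((real DIM('v) * M)\<^sup>2)"
    by (rule real_sqrt_le_mono)
  then show ?thesis unfolding t2norm_def using \<open>0 \<le> M\<close> by simp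
qed

lemma lam2norm_le_t2norm: "lam2norm E \<le> t2norm E"
  unfolding lam2norm_def t2norm_def by (intro real_sqrt_le_mono) (simp add: sum_nonneg)

context holder_surface
begin

lemma increment_le:
  assumes "0 \<le> s1" "s1 \<le> 1" "0 \<le> s2" "s2 \<le> 1" "0 \<le> t" "t \<le> 1"
  shows "norm (X (s2, t) - X (s1, t)) \<le> H * \<bar>s2 - s1\<bar> powr \<rho>"
  using holder[of "(s2, t)" "(s1, t)"] assms by (simp add: dist_Pair_Pair dist_real_def)

text \<open>The rectangular increment is bounded both by \<open>2H|s\<^sub>2 - s\<^sub>1|\<^sup>\<rho>\<close> and by \<open>2H|t\<^sub>2 - t\<^sub>1|\<^sup>\<rho>\<close>, hence by
  their geometric mean.\<close>

lemma rectangle_increment_le: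
  assumes "0 \<le> s1" "s1 \<le> 1" "0 \<le> s2" "s2 \<le> 1" "0 \<le> t1" "t1 \<le> 1" "0 \<le> t2" "t2 \<le> 1"
  shows "norm (X (s2, t1) - X (s1, t1) - (X (s2, t2) - X (s1, t2)))
           \<le> 2 * H * \<bar>s2 - s1\<bar> powr (\<rho> / 2) * \<bar>t2 - t1\<bar> powr (\<rho> / 2)"
proof (rule le_mult_if_le_squares)
  have sq: "(y powr (\<rho> / 2))\<^sup>2 = y powr \<rho>" if "0 \<le> y" for y :: real
    using powr_mult_nat[of 2 y "\<rho> / 2"] by simp
  interpret transpose: holder_surface "\<lambda>p. X (snd p, fst p)" H \<rho> by (rule holder_surface_transpose)
  have "norm (X (s2, t1) - X (s1, t1) - (X (s2, t2) - X (s1, t2)))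
      \<le> norm (X (s2, t1) - X (s1, t1)) + norm (X (s2, t2) - X (s1, t2))" by (rule norm_triangle_ineq4)
  also have "\<dots> \<le> H * \<bar>s2 - s1\<bar> powr \<rho> + H * \<bar>s2 - s1\<bar> powr \<rho>"
    using increment_le[of s1 s2 t1] increment_le[of s1 s2 t2] assms by (intro add_mono) auto
  finally show "norm (X (s2, t1) - X (s1, t1) - (X (s2, t2) - X (s1, t2))) \<le> 2 * H * (\<bar>s2 - s1\<bar> powr (\<rho> / 2))\<^sup>2"
    by (simp add: sq)
  have "norm (X (s2, t1) - X (s1, t1) - (X (s2, t2) - X (s1, t2)))
      = norm ((X (s1, t2) - X (s1, t1)) - (X (s2, t2) - X (s2, t1)))" by (simp add: algebra_simps)
  also have "\<dots> \<le> norm (X (s1, t2) - X (s1, t1)) + norm (X (s2, t2) - X (s2, t1))" by (rule norm_triangle_ineq4)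
  also have "\<dots> \<le> H * \<bar>t2 - t1\<bar> powr \<rho> + H * \<bar>t2 - t1\<bar> powr \<rho>"
    using transpose.increment_le[of t1 t2 s1] transpose.increment_le[of t1 t2 s2] assms
    by (intro add_mono) auto
  finally show "norm (X (s2, t1) - X (s1, t1) - (X (s2, t2) - X (s1, t2))) \<le> 2 * H * (\<bar>t2 - t1\<bar> powr (\<rho> / 2))\<^sup>2"
    by (simp add: sq)
qed (use H_nonneg in auto)

lemma row_S2_diff_abs_le:
  assumes "0 \<le> s1" "s1 \<le> s2" "s2 \<le> 1" "0 \<le> t1" "t1 \<le> 1" "0 \<le> t2" "t2 \<le> 1"
  shows "\<bar>S2 (\<lambda>s. X (s, t1)) s1 s2 u w - S2 (\<lambda>s. X (s, t2)) s1 s2 u w\<bar>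
     \<le> 4 * H\<^sup>2 * \<bar>t2 - t1\<bar> powr (\<rho> / 2) * norm u * norm w * sewing_constant (3 * \<rho> / 2) * (s2 - s1) powr (3 * \<rho> / 2)"
proof -
  have "norm ((X (q, t1) - X (p, t1)) - (X (q, t2) - X (p, t2))) \<le> (2 * H * \<bar>t2 - t1\<bar> powr (\<rho> / 2)) * (q - p) powr (\<rho> / 2)"
    if "0 \<le> p" "p \<le> q" "q \<le> 1" for p q
    using rectangle_increment_le[of p q t1 t2] that assms by (simp add: mult_ac)
  then have "\<bar>S2 (\<lambda>s. X (s, t1)) s1 s2 u w - S2 (\<lambda>s. X (s, t2)) s1 s2 u w\<bar>
      \<le> 2 * (2 * H * \<bar>t2 - t1\<bar> powr (\<rho> / 2)) * H * norm u * norm w * sewing_constant (\<rho> + \<rho> / 2) * (s2 - s1) powr (\<rho> + \<rho> / 2)"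
    using rho_gt H_nonneg assms by (intro S2_diff_abs_le row_young_path) auto
  then show ?thesis by (simp add: power2_eq_square mult_ac)
qed

lemma xh_level1_le:
  assumes "0 \<le> s1" "s1 \<le> 1" "0 \<le> s2" "s2 \<le> 1" "0 \<le> t" "t \<le> 1"
  shows "lvlnorm 1 (xh_of X s1 s2 t) \<le> H * \<bar>s2 - s1\<bar> powr \<rho>"
  unfolding lvlnorm_def xh_of_def using increment_le[OF assms] by simp

lemma xh_level2_le:
  assumes "0 \<le> s1" "s1 \<le> s2" "s2 \<le> 1" "0 \<le> t" "t \<le> 1"
  shows "lvlnorm 2 (xh_of X s1 s2 t) \<le> real DIM('v) * (H\<^sup>2 * sewing_constant (2 * \<rho>)) * \<bar>s2 - s1\<bar> powr (2 * \<rho>)"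
proof -
  interpret row: young_path "\<lambda>s. X (s, t)" H \<rho> using row_young_path assms by auto
  have "\<bar>S2 (\<lambda>s. X (s, t)) s1 s2 i j\<bar> \<le> H\<^sup>2 * sewing_constant (2 * \<rho>) * \<bar>s2 - s1\<bar> powr (2 * \<rho>)"
    if "i \<in> Basis" "j \<in> Basis" for i j
    using row.S2_abs_le[OF assms(1-3), of i j] that assms by (simp add: norm_Basis)
  then have "t2norm (S2 (\<lambda>s. X (s, t)) s1 s2) \<le> real DIM('v) * (H\<^sup>2 * sewing_constant (2 * \<rho>) * \<bar>s2 - s1\<bar> powr (2 * \<rho>))"
    by (rule t2norm_le)
  then show ?thesis unfolding lvlnorm_def xh_of_def by (simp add: mult_ac)
qed

lemma xh_diff_level1_le:
  assumes "0 \<le> s1" "s1 \<le> 1" "0 \<le> s2" "s2 \<le> 1" "0 \<le> t1" "t1 \<le> 1" "0 \<le> t2" "t2 \<le> 1"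
  shows "lvlnorm 1 (lvldiff (xh_of X s1 s2 t1) (xh_of X s1 s2 t2))
           \<le> 2 * H * (\<bar>s2 - s1\<bar> powr (\<rho> / 2) * \<bar>t2 - t1\<bar> powr (\<rho> / 2))"
  unfolding lvlnorm_def lvldiff_def xh_of_def using rectangle_increment_le[OF assms] by (simp add: mult_ac)

lemma xh_diff_level2_le:
  assumes "0 \<le> s1" "s1 \<le> s2" "s2 \<le> 1" "0 \<le> t1" "t1 \<le> 1" "0 \<le> t2" "t2 \<le> 1"
  shows "lvlnorm 2 (lvldiff (xh_of X s1 s2 t1) (xh_of X s1 s2 t2))
           \<le> real DIM('v) * (4 * H\<^sup>2 * sewing_constant (3 * \<rho> / 2))
               * (\<bar>s2 - s1\<bar> powr (3 * \<rho> / 2) * \<bar>t2 - t1\<bar> powr (\<rho> / 2))"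
proof -
  have "\<bar>S2 (\<lambda>s. X (s, t1)) s1 s2 i j - S2 (\<lambda>s. X (s, t2)) s1 s2 i j\<bar>
      \<le> 4 * H\<^sup>2 * sewing_constant (3 * \<rho> / 2) * (\<bar>s2 - s1\<bar> powr (3 * \<rho> / 2) * \<bar>t2 - t1\<bar> powr (\<rho> / 2))"
    if "i \<in> Basis" "j \<in> Basis" for i j
    using row_S2_diff_abs_le[OF assms, of i j] that assms by (simp add: norm_Basis mult_ac)
  then have "t2norm (\<lambda>u w. S2 (\<lambda>s. X (s, t1)) s1 s2 u w - S2 (\<lambda>s. X (s, t2)) s1 s2 u w)
      \<le> real DIM('v) * (4 * H\<^sup>2 * sewing_constant (3 * \<rho> / 2) * (\<bar>s2 - s1\<bar> powr (3 * \<rho> / 2) * \<bar>t2 - t1\<bar> powr (\<rho> / 2)))"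
    by (rule t2norm_le)
  then show ?thesis unfolding lvlnorm_def lvldiff_def xh_of_def by (simp add: mult_ac)
qed

lemma boundary_cross_term_abs_le:
  assumes "0 \<le> s1" "s1 \<le> 1" "0 \<le> s2" "s2 \<le> 1" "0 \<le> t1" "t1 \<le> 1" "0 \<le> t2" "t2 \<le> 1"
  defines "A \<equiv> \<bar>s2 - s1\<bar> powr (\<rho> / 2)" and "B \<equiv> \<bar>t2 - t1\<bar> powr (\<rho> / 2)"
  shows "\<bar>boundary_cross_term X s1 s2 t1 t2 u w\<bar> \<le> 2 * H\<^sup>2 * norm u * norm w * (A\<^sup>2 * B\<^sup>2 + A ^ 3 * B)"
proof -
  interpret transpose: holder_surface "\<lambda>p. X (snd p, fst p)" H \<rho> by (rule holder_surface_transpose)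
  define a b c where "a = X (s2, t1) - X (s1, t1)" and "b = X (s2, t2) - X (s2, t1)"
    and "c = X (s2, t2) - X (s1, t2)"
  have sq: "y powr \<rho> = (y powr (\<rho> / 2))\<^sup>2" for y :: real
    using powr_mult_nat[of 2 y "\<rho> / 2"] by simp
  have "norm a \<le> H * A\<^sup>2" "norm c \<le> H * A\<^sup>2"
    unfolding a_def c_def A_def sq[symmetric] using increment_le assms by auto
  moreover have "norm b \<le> H * B\<^sup>2"
    unfolding b_def B_def sq[symmetric] using transpose.increment_le[of t1 t2 s2] assms by simp
  moreover have "norm (a - c) \<le> 2 * H * A * B"
    unfolding a_def c_def A_def B_def using rectangle_increment_le[OF assms(1-8)] by simp
  ultimately have "\<bar>(a \<bullet> u) * (b \<bullet> w)\<bar> \<le> (H * A\<^sup>2 * norm u) * (H * B\<^sup>2 * norm w)"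
    "\<bar>((a - c) \<bullet> u) * (c \<bullet> w)\<bar> \<le> (2 * H * A * B * norm u) * (H * A\<^sup>2 * norm w)"
    "\<bar>(b \<bullet> u) * (c \<bullet> w)\<bar> \<le> (H * B\<^sup>2 * norm u) * (H * A\<^sup>2 * norm w)"
    unfolding abs_mult by (intro mult_mono abs_inner_le; simp add: H_nonneg A_def B_def)+
  then have "\<bar>boundary_cross_term X s1 s2 t1 t2 u w\<bar>
      \<le> (H * A\<^sup>2 * norm u) * (H * B\<^sup>2 * norm w) + (2 * H * A * B * norm u) * (H * A\<^sup>2 * norm w)
         + (H * B\<^sup>2 * norm u) * (H * A\<^sup>2 * norm w)"
    unfolding boundary_cross_term_def Let_def a_def b_def c_def by linarith
  also have "\<dots> = 2 * H\<^sup>2 * norm u * norm w * (A\<^sup>2 * B\<^sup>2 + A ^ 3 * B)"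
    by (simp add: power2_eq_square power3_eq_cube algebra_simps)
  finally show ?thesis .
qed

lemma XX_of_entry_abs_le:
  assumes "0 \<le> s1" "s1 \<le> s2" "s2 \<le> 1" "0 \<le> t1" "t1 \<le> t2" "t2 \<le> 1" "i \<in> Basis" "j \<in> Basis"
  defines "A \<equiv> \<bar>s2 - s1\<bar> powr (\<rho> / 2)" and "B \<equiv> \<bar>t2 - t1\<bar> powr (\<rho> / 2)"
    and "Z \<equiv> sewing_constant (3 * \<rho> / 2)"
  shows "\<bar>XX_of X s1 s2 t1 t2 i j\<bar> \<le> (4 * H\<^sup>2 * Z + 2 * H\<^sup>2) * (A * B ^ 3 + A\<^sup>2 * B\<^sup>2 + A ^ 3 * B)"
proof -
  interpret transpose: holder_surface "\<lambda>p. X (snd p, fst p)" H \<rho> by (rule holder_surface_transpose)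
  have "0 \<le> Z" unfolding Z_def using rho_gt by (intro sewing_constant_nonneg) simp
  have cube: "y powr (3 * \<rho> / 2) = (y powr (\<rho> / 2)) ^ 3" for y :: real
    using powr_mult_nat[of 3 y "\<rho> / 2"] by simp
  have "\<bar>S2 (\<lambda>s. X (s, t1)) s1 s2 i j - S2 (\<lambda>s. X (s, t2)) s1 s2 i j\<bar> \<le> 4 * H\<^sup>2 * Z * A ^ 3 * B"
    using row_S2_diff_abs_le[of s1 s2 t1 t2 i j, unfolded cube] assms
    by (simp add: norm_Basis mult_ac)
  moreover have "\<bar>S2 (\<lambda>t. X (s1, t)) t1 t2 i j - S2 (\<lambda>t. X (s2, t)) t1 t2 i j\<bar> \<le> 4 * H\<^sup>2 * Z * A * B ^ 3"
    using transpose.row_S2_diff_abs_le[of t1 t2 s1 s2 i j, unfolded cube] assms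
    by (simp add: norm_Basis abs_minus_commute mult_ac)
  moreover have "\<bar>boundary_cross_term X s1 s2 t1 t2 i j\<bar> \<le> 2 * H\<^sup>2 * (A\<^sup>2 * B\<^sup>2 + A ^ 3 * B)"
    using boundary_cross_term_abs_le[of s1 s2 t1 t2 i j] assms by (simp add: norm_Basis)
  moreover have "0 \<le> H\<^sup>2 * A * B ^ 3" "0 \<le> H\<^sup>2 * Z * A\<^sup>2 * B\<^sup>2"
    using \<open>0 \<le> Z\<close> unfolding A_def B_def by auto
  ultimately show ?thesis unfolding XX_of_eq by (simp add: algebra_simps)
qed

lemma XX_of_le:
  assumes "0 \<le> s1" "s1 \<le> s2" "s2 \<le> 1" "0 \<le> t1" "t1 \<le> t2" "t2 \<le> 1"
  shows "lam2norm (XX_of X s1 s2 t1 t2) \<le> real DIM('v) * (4 * H\<^sup>2 * sewing_constant (3 * \<rho> / 2) + 2 * H\<^sup>2)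
     * (\<Sum>q = 1..2 * 2 - 1. \<bar>s2 - s1\<bar> powr (real q * (\<rho> / 2)) * \<bar>t2 - t1\<bar> powr (real (2 * 2 - q) * (\<rho> / 2)))"
proof -
  have "\<bar>XX_of X s1 s2 t1 t2 i j\<bar> \<le> (4 * H\<^sup>2 * sewing_constant (3 * \<rho> / 2) + 2 * H\<^sup>2)
      * (\<bar>s2 - s1\<bar> powr (\<rho> / 2) * (\<bar>t2 - t1\<bar> powr (\<rho> / 2)) ^ 3
         + (\<bar>s2 - s1\<bar> powr (\<rho> / 2))\<^sup>2 * (\<bar>t2 - t1\<bar> powr (\<rho> / 2))\<^sup>2
         + (\<bar>s2 - s1\<bar> powr (\<rho> / 2)) ^ 3 * \<bar>t2 - t1\<bar> powr (\<rho> / 2))"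
    if "i \<in> Basis" "j \<in> Basis" for i j
    using XX_of_entry_abs_le[OF assms that] .
  then have "t2norm (XX_of X s1 s2 t1 t2) \<le> real DIM('v) * ((4 * H\<^sup>2 * sewing_constant (3 * \<rho> / 2) + 2 * H\<^sup>2)
      * (\<bar>s2 - s1\<bar> powr (\<rho> / 2) * (\<bar>t2 - t1\<bar> powr (\<rho> / 2)) ^ 3
         + (\<bar>s2 - s1\<bar> powr (\<rho> / 2))\<^sup>2 * (\<bar>t2 - t1\<bar> powr (\<rho> / 2))\<^sup>2
         + (\<bar>s2 - s1\<bar> powr (\<rho> / 2)) ^ 3 * \<bar>t2 - t1\<bar> powr (\<rho> / 2)))"
    by (rule t2norm_le)
  then show ?thesis
    unfolding sum_powr_degree_four using lam2norm_le_t2norm order_trans by (simp only: mult.assoc) blast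
qed

end

section \<open>Choice of the control\<close>

lemma fct_pos: "0 \<le> x \<Longrightarrow> 0 < fct x"
  unfolding fct_def by simp

lemma le_powr_inverse_powr: "1 \<le> M \<Longrightarrow> 0 < \<rho> \<Longrightarrow> \<rho> \<le> e \<Longrightarrow> M \<le> (M powr (1 / \<rho>)) powr e"
  for M \<rho> e :: real
  using powr_mono[of 1 "e / \<rho>" M] by (simp add: powr_powr)

lemma le_mult_div_if_le_mult:
  fixes x K P D M N :: real
  assumes "x \<le> K * P" "0 \<le> P" "K * D \<le> M" "0 < D" "M \<le> N"
  shows "x \<le> N * P / D"
proof -
  have "K \<le> N / D" using assms(3-5) by (simp add: pos_le_divide_eq)
  then have "K * P \<le> N / D * P" using assms(2) by (rule mult_right_mono)
  then show ?thesis using assms(1) by simp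
qed

lemma le_omega_powr_div:
  assumes "x \<le> K * \<bar>b - a\<bar> powr e" "K * D \<le> M" "0 < D" "1 \<le> M" "0 < \<rho>" "\<rho> \<le> e"
  shows "x \<le> omega (M powr (1 / \<rho>)) a b powr e / D"
proof -
  have "x \<le> (M powr (1 / \<rho>)) powr e * \<bar>b - a\<bar> powr e / D"
    using assms le_powr_inverse_powr by (intro le_mult_div_if_le_mult[where K = K and M = M]) auto
  then show ?thesis unfolding omega_def by (simp add: powr_mult)
qed

lemma le_omega_powr_mult_div:
  assumes "x \<le> K * (\<bar>b - a\<bar> powr e1 * \<bar>d - c\<bar> powr e2)" "K * D \<le> M" "0 < D" "1 \<le> M" "0 < \<rho>" "\<rho> \<le> e1 + e2"
  shows "x \<le> omega (M powr (1 / \<rho>)) a b powr e1 * omega (M powr (1 / \<rho>)) c d powr e2 / D"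
proof -
  have "x \<le> (M powr (1 / \<rho>)) powr (e1 + e2) * (\<bar>b - a\<bar> powr e1 * \<bar>d - c\<bar> powr e2) / D"
    using assms le_powr_inverse_powr by (intro le_mult_div_if_le_mult[where K = K and M = M]) auto
  then show ?thesis unfolding omega_def by (simp add: powr_mult powr_add mult_ac)
qed

definition surface_constant :: "real \<Rightarrow> real \<Rightarrow> nat \<Rightarrow> real" where
  "surface_constant H \<rho> d =
     real d * (2 * H + H\<^sup>2 * (sewing_constant (2 * \<rho>) + 4 * sewing_constant (3 * \<rho> / 2) + 2))"

text \<open>The Gamma-function denominators occurring in \<^const>\<open>rho_holder_dgf\<close>.\<close>

definition gamma_factors :: "real \<Rightarrow> real set" where
  "gamma_factors \<rho> = (\<lambda>k. fct (real k * \<rho>)) ` {1, 2}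
     \<union> (\<lambda>k. fct ((2 * real k - 1) * (\<rho> / 2)) * fct (\<rho> / 2)) ` {1, 2}
     \<union> (\<lambda>q. fct (real q * (\<rho> / 2)) * fct (real (2 * 2 - q) * (\<rho> / 2))) ` {1..2 * 2 - 1}"

lemma finite_gamma_factors: "finite (gamma_factors \<rho>)"
  unfolding gamma_factors_def by simp

context holder_surface
begin

lemma surface_constant_ge:
  defines "K \<equiv> surface_constant H \<rho> DIM('v)"
  shows "H \<le> K" "2 * H \<le> K" "real DIM('v) * (H\<^sup>2 * sewing_constant (2 * \<rho>)) \<le> K"
    "real DIM('v) * (4 * H\<^sup>2 * sewing_constant (3 * \<rho> / 2)) \<le> K"
    "real DIM('v) * (4 * H\<^sup>2 * sewing_constant (3 * \<rho> / 2) + 2 * H\<^sup>2) \<le> K"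
proof -
  define Z2 Z3 where "Z2 = sewing_constant (2 * \<rho>)" and "Z3 = sewing_constant (3 * \<rho> / 2)"
  have "0 \<le> Z2" "0 \<le> Z3" unfolding Z2_def Z3_def using rho_gt by (auto intro!: sewing_constant_nonneg)
  then have "0 \<le> H\<^sup>2 * Z2" "0 \<le> H\<^sup>2 * Z3" by simp_all
  define T where "T = 2 * H + H\<^sup>2 * Z2 + 4 * (H\<^sup>2 * Z3) + 2 * H\<^sup>2"
  have K: "K = real DIM('v) * T"
    unfolding K_def T_def Z2_def Z3_def surface_constant_def by (simp add: algebra_simps)
  have d: "1 \<le> real DIM('v)" by (simp add: DIM_positive Suc_le_eq)
  have T: "0 \<le> T" "2 * H \<le> T" "H\<^sup>2 * Z2 \<le> T" "4 * H\<^sup>2 * Z3 \<le> T" "4 * H\<^sup>2 * Z3 + 2 * H\<^sup>2 \<le> T"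
    unfolding T_def using H_nonneg \<open>0 \<le> H\<^sup>2 * Z2\<close> \<open>0 \<le> H\<^sup>2 * Z3\<close> by (simp_all add: zero_le_power2)
  have "T \<le> K" unfolding K using mult_right_mono[OF d T(1)] by simp
  then show "H \<le> K" "2 * H \<le> K" using T(2) H_nonneg by linarith+
  show "real DIM('v) * (H\<^sup>2 * sewing_constant (2 * \<rho>)) \<le> K"
    "real DIM('v) * (4 * H\<^sup>2 * sewing_constant (3 * \<rho> / 2)) \<le> K"
    "real DIM('v) * (4 * H\<^sup>2 * sewing_constant (3 * \<rho> / 2) + 2 * H\<^sup>2) \<le> K"
    unfolding K Z2_def[symmetric] Z3_def[symmetric] using T d by (auto intro!: mult_left_mono)
qed

context
  fixes M \<beta> :: real
  assumes M: "1 \<le> M" and \<beta>: "0 < \<beta>"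
    and M_ge: "\<And>F. F \<in> gamma_factors \<rho> \<Longrightarrow> surface_constant H \<rho> DIM('v) * (\<beta> * F) \<le> M"
begin

lemma xh_level_rho_holder:
  assumes "k \<in> {1, 2}" "0 \<le> s1" "s1 \<le> s2" "s2 \<le> 1" "0 \<le> t" "t \<le> 1"
  shows "lvlnorm k (xh_of X s1 s2 t) \<le> omega (M powr (1 / \<rho>)) s1 s2 powr (real k * \<rho>) / (\<beta> * fct (real k * \<rho>))"
proof (rule le_omega_powr_div)
  consider "k = 1" | "k = 2" using assms(1) by blast
  then show "lvlnorm k (xh_of X s1 s2 t) \<le> surface_constant H \<rho> DIM('v) * \<bar>s2 - s1\<bar> powr (real k * \<rho>)"
  proof cases
    case 1
    have "lvlnorm 1 (xh_of X s1 s2 t) \<le> H * \<bar>s2 - s1\<bar> powr \<rho>" using assms by (intro xh_level1_le) auto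
    also have "\<dots> \<le> surface_constant H \<rho> DIM('v) * \<bar>s2 - s1\<bar> powr \<rho>"
      using surface_constant_ge(1) by (rule mult_right_mono) simp
    finally show ?thesis using 1 by simp
  next
    case 2
    have "lvlnorm 2 (xh_of X s1 s2 t)
        \<le> real DIM('v) * (H\<^sup>2 * sewing_constant (2 * \<rho>)) * \<bar>s2 - s1\<bar> powr (2 * \<rho>)"
      using xh_level2_le assms by simp
    also have "\<dots> \<le> surface_constant H \<rho> DIM('v) * \<bar>s2 - s1\<bar> powr (2 * \<rho>)"
      using surface_constant_ge(3) by (rule mult_right_mono) simp
    finally show ?thesis using 2 by simp
  qed
  show "surface_constant H \<rho> DIM('v) * (\<beta> * fct (real k * \<rho>)) \<le> M"
    using assms(1) by (intro M_ge) (auto simp: gamma_factors_def)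
qed (use assms M \<beta> rho_gt in \<open>auto intro!: mult_pos_pos fct_pos\<close>)

lemma xh_diff_rho_holder:
  assumes "k \<in> {1, 2}" "0 \<le> s1" "s1 \<le> s2" "s2 \<le> 1" "0 \<le> t1" "t1 \<le> 1" "0 \<le> t2" "t2 \<le> 1"
  shows "lvlnorm k (lvldiff (xh_of X s1 s2 t1) (xh_of X s1 s2 t2))
    \<le> omega (M powr (1 / \<rho>)) s1 s2 powr ((2 * real k - 1) * (\<rho> / 2)) * omega (M powr (1 / \<rho>)) t1 t2 powr (\<rho> / 2)
        / (\<beta> * fct ((2 * real k - 1) * (\<rho> / 2)) * fct (\<rho> / 2))"
proof (rule le_omega_powr_mult_div)
  define P where "P e = \<bar>s2 - s1\<bar> powr e * \<bar>t2 - t1\<bar> powr (\<rho> / 2)" for e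
  have "0 \<le> P e" for e unfolding P_def by simp
  consider "k = 1" | "k = 2" using assms(1) by blast
  then show "lvlnorm k (lvldiff (xh_of X s1 s2 t1) (xh_of X s1 s2 t2))
      \<le> surface_constant H \<rho> DIM('v) * (\<bar>s2 - s1\<bar> powr ((2 * real k - 1) * (\<rho> / 2)) * \<bar>t2 - t1\<bar> powr (\<rho> / 2))"
  proof cases
    case 1
    have "lvlnorm 1 (lvldiff (xh_of X s1 s2 t1) (xh_of X s1 s2 t2)) \<le> 2 * H * P (\<rho> / 2)"
      unfolding P_def using assms by (intro xh_diff_level1_le) auto
    also have "\<dots> \<le> surface_constant H \<rho> DIM('v) * P (\<rho> / 2)"
      using surface_constant_ge(2) \<open>0 \<le> P (\<rho> / 2)\<close> by (rule mult_right_mono)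
    finally show ?thesis using 1 unfolding P_def by simp
  next
    case 2
    have "lvlnorm 2 (lvldiff (xh_of X s1 s2 t1) (xh_of X s1 s2 t2))
        \<le> real DIM('v) * (4 * H\<^sup>2 * sewing_constant (3 * \<rho> / 2)) * P (3 * \<rho> / 2)"
      unfolding P_def using xh_diff_level2_le assms by simp
    also have "\<dots> \<le> surface_constant H \<rho> DIM('v) * P (3 * \<rho> / 2)"
      using surface_constant_ge(4) \<open>0 \<le> P (3 * \<rho> / 2)\<close> by (rule mult_right_mono)
    finally show ?thesis using 2 unfolding P_def by simp
  qed
  show "surface_constant H \<rho> DIM('v) * (\<beta> * fct ((2 * real k - 1) * (\<rho> / 2)) * fct (\<rho> / 2)) \<le> M"
    using assms(1) M_ge[of "fct ((2 * real k - 1) * (\<rho> / 2)) * fct (\<rho> / 2)"]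
    by (auto simp: gamma_factors_def mult.assoc)
qed (use assms M \<beta> rho_gt in \<open>auto intro!: mult_pos_pos fct_pos\<close>)

lemma XX_of_rho_holder:
  assumes "0 \<le> s1" "s1 \<le> s2" "s2 \<le> 1" "0 \<le> t1" "t1 \<le> t2" "t2 \<le> 1"
  shows "lam2norm (XX_of X s1 s2 t1 t2) \<le> Wk (M powr (1 / \<rho>)) (\<rho> / 2) 2 s1 s2 t1 t2 / \<beta>"
proof -
  define K where "K = surface_constant H \<rho> DIM('v)"
  define C where "C = M powr (1 / \<rho>)"
  define g where "g q = omega C s1 s2 powr (real q * (\<rho> / 2)) * omega C t1 t2 powr (real (2 * 2 - q) * (\<rho> / 2))
      / (fct (real q * (\<rho> / 2)) * fct (real (2 * 2 - q) * (\<rho> / 2)))" for q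
  have "lam2norm (XX_of X s1 s2 t1 t2)
      \<le> K * (\<Sum>q = 1..2 * 2 - 1. \<bar>s2 - s1\<bar> powr (real q * (\<rho> / 2)) * \<bar>t2 - t1\<bar> powr (real (2 * 2 - q) * (\<rho> / 2)))"
    using XX_of_le[OF assms] unfolding K_def
    by (elim order_trans, intro mult_right_mono surface_constant_ge(5) sum_nonneg) simp
  also have "\<dots> \<le> (\<Sum>q = 1..2 * 2 - 1. g q / \<beta>)"
    unfolding sum_distrib_left
  proof (intro sum_mono)
    fix q :: nat assume q: "q \<in> {1..2 * 2 - 1}"
    show "K * (\<bar>s2 - s1\<bar> powr (real q * (\<rho> / 2)) * \<bar>t2 - t1\<bar> powr (real (2 * 2 - q) * (\<rho> / 2))) \<le> g q / \<beta>"
      unfolding g_def C_def divide_divide_eq_left'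
    proof (rule le_omega_powr_mult_div[OF order_refl])
      show "K * (\<beta> * (fct (real q * (\<rho> / 2)) * fct (real (2 * 2 - q) * (\<rho> / 2)))) \<le> M"
        unfolding K_def using q by (intro M_ge) (auto simp: gamma_factors_def)
      show "\<rho> \<le> real q * (\<rho> / 2) + real (2 * 2 - q) * (\<rho> / 2)"
        using q rho_gt by (simp add: of_nat_diff field_simps)
    qed (use q M \<beta> rho_gt in \<open>auto intro!: mult_pos_pos fct_pos\<close>)
  qed
  also have "\<dots> = (\<Sum>q = 1..2 * 2 - 1. g q) / \<beta>" by (simp add: sum_divide_distrib)
  also have "\<dots> \<le> Wk C (\<rho> / 2) 2 s1 s2 t1 t2 / \<beta>"
  proof -
    have "0 \<le> (\<Sum>q = 1..2 * 2 - 1. g q)" unfolding g_def using rho_gt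
      by (intro sum_nonneg divide_nonneg_pos mult_nonneg_nonneg mult_pos_pos fct_pos) auto
    moreover have "1 \<le> 2 powr (2 * real (2::nat) * (\<rho> / 2))" using rho_gt by (intro ge_one_powr_ge_zero) auto
    ultimately have "1 * (\<Sum>q = 1..2 * 2 - 1. g q) \<le> 2 powr (2 * real (2::nat) * (\<rho> / 2)) * (\<Sum>q = 1..2 * 2 - 1. g q)"
      by (intro mult_right_mono)
    then have "(\<Sum>q = 1..2 * 2 - 1. g q) \<le> Wk C (\<rho> / 2) 2 s1 s2 t1 t2"
      unfolding Wk_def g_def by simp
    then show ?thesis using \<beta> by (simp add: divide_right_mono)
  qed
  finally show ?thesis unfolding C_def .
qed

lemma rho_holder_dgf: "rho_holder_dgf \<rho> \<beta> (M powr (1 / \<rho>)) (xh_of X) (xv_of X) (XX_of X)"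
proof -
  interpret transpose: holder_surface "\<lambda>p. X (snd p, fst p)" H \<rho> by (rule holder_surface_transpose)
  note level = transpose.xh_level_rho_holder[OF M \<beta> M_ge, folded xv_of_eq_xh_of_transpose]
  note diff = transpose.xh_diff_rho_holder[OF M \<beta> M_ge, folded xv_of_eq_xh_of_transpose]
  show ?thesis
    unfolding rho_holder_dgf_def Let_def
    by (intro conjI ballI allI impI; elim conjE;
        rule xh_level_rho_holder xh_diff_rho_holder XX_of_rho_holder level diff; assumption)
qed

end

end

lemma holder_2d_imp_holder_surface:
  assumes "holder_2d \<rho> X" "2 / 3 < \<rho>"
  obtains H where "holder_surface X H \<rho>"
proof -
  obtain C where C: "\<forall>p\<in>{0..1} \<times> {0..1}. \<forall>q\<in>{0..1} \<times> {0..1}. norm (X p - X q) \<le> C * dist p q powr \<rho>"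
    using assms(1) unfolding holder_2d_def by blast
  have "norm (X p - X q) \<le> \<bar>C\<bar> * dist p q powr \<rho>" if "p \<in> {0..1} \<times> {0..1}" "q \<in> {0..1} \<times> {0..1}" for p q
    using C that by (meson abs_ge_self mult_right_mono order_trans powr_ge_zero)
  then have "holder_surface X \<bar>C\<bar> \<rho>" by unfold_locales (use assms(2) in auto)
  then show ?thesis by (rule that)
qed

lemma beta_bound_pos:
  assumes "0 < \<rho>" shows "0 < beta_bound \<rho>"
proof -
  have "1 / \<rho> < of_int \<lfloor>1 / \<rho>\<rfloor> + 1" by (rule real_of_int_floor_add_one_gt)
  then have "1 < \<rho> * (of_int \<lfloor>1 / \<rho>\<rfloor> + 1)" using assms by (simp add: field_simps)
  then have "0 \<le> sewing_constant (\<rho> * (of_int \<lfloor>1 / \<rho>\<rfloor> + 1))" by (rule sewing_constant_nonneg)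
  then have "0 < 2 / \<rho>\<^sup>2 * (1 + sewing_constant (\<rho> * (of_int \<lfloor>1 / \<rho>\<rfloor> + 1)))"
    using assms by (intro mult_pos_pos) auto
  then show ?thesis unfolding beta_bound_def sewing_constant_def by linarith
qed

theorem proposition5p17:
  fixes X :: "real \<times> real \<Rightarrow> 'v::euclidean_space" and \<rho> \<beta> :: real
  assumes "2 / 3 < \<rho>" and "\<rho> \<le> 1"
    and "holder_2d \<rho> X"
    and "\<beta> > beta_bound \<rho>"
  shows "\<exists>C>0. double_group_functional (xh_of X) (xv_of X) (XX_of X)
             \<and> multiplicative_dgf (xh_of X) (xv_of X) (XX_of X)
             \<and> rho_holder_dgf \<rho> \<beta> C (xh_of X) (xv_of X) (XX_of X)"
proof -
  obtain H where "holder_surface X H \<rho>" using holder_2d_imp_holder_surface assms(1,3) by blast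
  then interpret X: holder_surface X H \<rho> .
  have \<beta>: "0 < \<beta>" using beta_bound_pos[of \<rho>] assms by linarith
  define M where "M = Max (insert 1 ((\<lambda>F. surface_constant H \<rho> DIM('v) * (\<beta> * F)) ` gamma_factors \<rho>))"
  have M: "1 \<le> M" "\<And>F. F \<in> gamma_factors \<rho> \<Longrightarrow> surface_constant H \<rho> DIM('v) * (\<beta> * F) \<le> M"
  proof -
    have "finite (insert 1 ((\<lambda>F. surface_constant H \<rho> DIM('v) * (\<beta> * F)) ` gamma_factors \<rho>))"
      by (simp add: finite_gamma_factors)
    from Max_ge[OF this] show "1 \<le> M" "\<And>F. F \<in> gamma_factors \<rho> \<Longrightarrow> surface_constant H \<rho> DIM('v) * (\<beta> * F) \<le> M"
      unfolding M_def by auto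
  qed
  have "rho_holder_dgf \<rho> \<beta> (M powr (1 / \<rho>)) (xh_of X) (xv_of X) (XX_of X)"
    by (rule X.rho_holder_dgf[OF M(1) \<beta> M(2)])
  moreover note X.double_group_functional X.multiplicative_dgf
  ultimately show ?thesis using M(1) by (intro exI[of _ "M powr (1 / \<rho>)"]) auto
qed

end
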